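(* Let $(w_n)_{n\ge 0}$ be nonnegative reals with $W(z)=\sum_{n\ge0}w_nz^n$, and assume there are $\rho_w>0$ and a slowly varying $L_w$ with $w_n\sim L_w(n)n^{-1}\rho_w^{-n}$ and $W(\rho_w)\in(0,\infty)$. Let $X$ have probability generating function $W(\rho_w z)/W(\rho_w)$. Consider the condition $$(\ast)\qquad \lim_{n\to\infty}\frac{\mathbb{P}(X>n^t)}{\mathbb{P}(X>n)}\ \text{exists for all } 0<t<1.$$ (1) $(\ast)$ holds if and only if there exists $\gamma\ge0$ with $\lim_{n\to\infty}\mathbb{P}(X>n^t)/\mathbb{P}(X>n)=t^{-\gamma}$ for all $0<t<1$. (2) If there are $\gamma>0$ and a slowly varying function $L$ with $L_w(n)=L(\log n)/\log^{1+\gamma}n$, then $\lim_{n\to\infty}\mathbb{P}(X>n^t)/\mathbb{P}(X>n)=t^{-\gamma}$ for all $0<t<1$ with this $\gamma$, and in this case $\mathbb{P}(X>n)\sim W(\rho_w)^{-1}\,\dfrac{L(\log n)}{\gamma\log^\gamma n}$. (3) If $L_w$ is eventually monotone and $\lim_{n\to\infty}\mathbb{P}(X>n^t)/\mathbb{P}(X>n)=t^{-\gamma}$ for all $0<t<1$ with some $\gamma>0$, then there is a slowly varying function $L$ with $L_w(n)=L(\log n)/\log^{1+\gamma}n$.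
   Context: Slowly varying means slowly varying at infinity. Limits are over integers $n\to\infty$. *)

theory Defs
  imports "HOL-Analysis.Analysis" "HOL-Library.Landau_Symbols"
begin

definition slowly_varying :: "(real \<Rightarrow> real) \<Rightarrow> bool" where
  "slowly_varying L \<longleftrightarrow>
     (\<exists>a. (\<forall>x\<ge>a. L x > 0) \<and> (\<lambda>x. if a \<le> x then L x else 0) \<in> borel_measurable borel) \<and>
     (\<forall>c>0. ((\<lambda>x. L (c * x) / L x) \<longlongrightarrow> 1) at_top)"

definition gen_fun :: "(nat \<Rightarrow> real) \<Rightarrow> real \<Rightarrow> real" where
  "gen_fun w z = (\<Sum>n. w n * z ^ n)"

text \<open>Tail P(X > x) of the random variable X with probability generating function
  W(rho z)/W(rho), i.e. P(X = k) = w_k rho^k / W(rho).\<close>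
definition tail_prob :: "(nat \<Rightarrow> real) \<Rightarrow> real \<Rightarrow> real \<Rightarrow> real" where
  "tail_prob w \<rho> x = (\<Sum>k. if real k > x then w k * \<rho> ^ k else 0) / gen_fun w \<rho>"

end

(*
  Write a_k = w_k rho^k, so that P(X > x) = S(x) / W(rho) with S(x) the sum of the a_k over k > x,
  and the ratios in question are R_t(n) = S(n^t) / S(n).

  (1) If g(t) = lim R_t(n) exists for all t in (0,1), then g >= 1 is nonincreasing, and replacing n
  by floor(n^t) shows g(s t) = g(s) g(t) up to an arbitrarily small change of s.  Hence
  u |-> ln g(exp(-u)) is monotone and additive, i.e. linear, and g(t) = t^(-gamma).

  (2) If L_w(n) = L(ln n) / ln^(1+gamma) n, the uniform convergence theorem for L gives
  S(n) - S(n^2) ~ (1 - 2^(-gamma)) G(n) with G(n) = L(ln n) / (gamma ln^gamma n).  Since also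
  G(n^2) ~ 2^(-gamma) G(n), summing over the blocks (n, n^2], (n^2, n^4], ... yields S(n) ~ G(n),
  from which the ratio limit follows.

  (3) An eventually nondecreasing L_w is impossible: the sum of the a_k would dominate the harmonic
  series.  If L_w is eventually nonincreasing, the block sum S(m) - S(n) lies between L_w(n) and
  L_w(m) times ln(n/m) (up to 1 + o(1)); taking m = n^t and letting t -> 1 gives
  L_w(n) ln n / S(n) -> gamma.  So L(u) = L_w(e^u) u^(1+gamma) behaves like gamma S(e^u) u^gamma,
  and S(e^(c u)) / S(e^u) -> c^(-gamma) makes L slowly varying.
*)
theory Submission
  imports Defs "HOL-Real_Asymp.Real_Asymp"
begin

lemma abs_minus_1_lt_of_abs_ln_lt:
  fixes r \<epsilon> :: real
  assumes "r > 0" "\<epsilon> > 0" "\<bar>ln r\<bar> < ln (1 + \<epsilon>)"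
  shows "\<bar>r - 1\<bar> < \<epsilon>"
proof -
  have "ln r < ln (1 + \<epsilon>)" using assms by linarith
  then have upper: "r < 1 + \<epsilon>" using assms by simp
  have "ln (inverse r) < ln (1 + \<epsilon>)" using assms by (simp add: ln_inverse)
  then have "1 < r * (1 + \<epsilon>)" using assms by (simp add: field_simps)
  have lower: "1 - \<epsilon> < r"
  proof (rule ccontr)
    assume "\<not> 1 - \<epsilon> < r"
    then have "r * (1 + \<epsilon>) \<le> (1 - \<epsilon>) * (1 + \<epsilon>)" using assms by (intro mult_right_mono) auto
    also have "\<dots> \<le> 1" by (simp add: algebra_simps)
    finally show False using \<open>1 < r * (1 + \<epsilon>)\<close> by simp
  qed
  show ?thesis using upper lower by simp
qed

lemma abs_inverse_minus_1_lt:
  fixes r \<epsilon> :: real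
  assumes "\<bar>r - 1\<bar> < \<epsilon>" "\<epsilon> \<le> 1/2"
  shows "\<bar>1 / r - 1\<bar> < 2 * \<epsilon>"
proof -
  have r: "r > 1/2" using assms by linarith
  then have "\<bar>1 / r - 1\<bar> = \<bar>1 - r\<bar> / r" by (simp add: field_simps)
  also have "\<dots> \<le> \<bar>1 - r\<bar> / (1/2)" using r by (intro divide_left_mono) auto
  also have "\<dots> < 2 * \<epsilon>" using assms by simp
  finally show ?thesis .
qed

lemma eventually_abs_diff_less_of_ratio_tendsto_1:
  fixes x y :: "'a \<Rightarrow> real"
  assumes "((\<lambda>k. x k / y k) \<longlongrightarrow> 1) F" "eventually (\<lambda>k. y k > 0) F" "\<epsilon> > 0"
  shows "eventually (\<lambda>k. \<bar>x k - y k\<bar> < \<epsilon> * y k) F"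
proof -
  have "eventually (\<lambda>k. \<bar>x k / y k - 1\<bar> < \<epsilon>) F"
    using assms(1,3) unfolding tendsto_iff dist_real_def by blast
  with assms(2) show ?thesis
  proof eventually_elim
    case (elim k)
    then have "\<bar>(x k - y k) / y k\<bar> < \<epsilon>" by (simp add: diff_divide_distrib)
    then show ?case using elim by (simp add: abs_div pos_divide_less_eq)
  qed
qed

lemma abs_diff_le_rel_trans:
  fixes x y z \<delta> :: real
  assumes "\<bar>x - y\<bar> \<le> \<delta> * y" "\<bar>y - z\<bar> \<le> \<delta> * z" "0 \<le> \<delta>" "\<delta> \<le> 1" "z \<ge> 0"
  shows "\<bar>x - z\<bar> \<le> 3 * \<delta> * z"
proof -
  have "y \<le> 2 * z" using assms by (smt (verit) mult_left_le_one_le)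
  then have "\<delta> * y \<le> \<delta> * (2 * z)" using assms by (intro mult_left_mono) auto
  then show ?thesis using assms by linarith
qed

lemma sum_ratio_tendsto_1_of_rel_close:
  fixes c d :: "nat \<Rightarrow> nat \<Rightarrow> real" and B :: "nat \<Rightarrow> nat set"
  assumes fin: "\<And>n. finite (B n)" and ne: "eventually (\<lambda>n. B n \<noteq> {}) sequentially"
    and close: "\<And>\<epsilon>. \<epsilon> > 0 \<Longrightarrow>
      eventually (\<lambda>n. \<forall>k\<in>B n. d n k > 0 \<and> \<bar>c n k - d n k\<bar> \<le> \<epsilon> * d n k) sequentially"
  shows "(\<lambda>n. (\<Sum>k\<in>B n. c n k) / (\<Sum>k\<in>B n. d n k)) \<longlonglongrightarrow> 1"
  unfolding tendsto_iff dist_real_def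
proof (intro allI impI)
  fix e :: real assume e: "e > 0"
  have e2: "e/2 > 0" using e by simp
  from close[OF e2] ne show "eventually (\<lambda>n. \<bar>(\<Sum>k\<in>B n. c n k) / (\<Sum>k\<in>B n. d n k) - 1\<bar> < e) sequentially"
  proof eventually_elim
    case (elim n)
    have Sd: "(\<Sum>k\<in>B n. d n k) > 0" using elim fin by (intro sum_pos) auto
    have "\<bar>(\<Sum>k\<in>B n. c n k) - (\<Sum>k\<in>B n. d n k)\<bar> = \<bar>\<Sum>k\<in>B n. c n k - d n k\<bar>"
      by (simp add: sum_subtractf)
    also have "\<dots> \<le> (\<Sum>k\<in>B n. \<bar>c n k - d n k\<bar>)" by (rule sum_abs)
    also have "\<dots> \<le> (\<Sum>k\<in>B n. e/2 * d n k)" using elim by (intro sum_mono) auto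
    also have "\<dots> = e/2 * (\<Sum>k\<in>B n. d n k)" by (simp add: sum_distrib_left)
    finally have "\<bar>(\<Sum>k\<in>B n. c n k) - (\<Sum>k\<in>B n. d n k)\<bar> \<le> e/2 * (\<Sum>k\<in>B n. d n k)" .
    then have "\<bar>(\<Sum>k\<in>B n. c n k) / (\<Sum>k\<in>B n. d n k) - 1\<bar> \<le> e/2"
      using Sd by (simp add: abs_le_iff field_simps)
    then show ?case using e by simp
  qed
qed

lemma tendsto_1_of_eventually_bounds:
  fixes r :: "nat \<Rightarrow> real" and lo hi :: "real \<Rightarrow> real"
  assumes lo: "(lo \<longlongrightarrow> 1) (at_right 0)" and hi: "(hi \<longlongrightarrow> 1) (at_right 0)"
    and e0: "e0 > 0"
    and bounds: "\<And>\<epsilon>. 0 < \<epsilon> \<Longrightarrow> \<epsilon> < e0 \<Longrightarrow> eventually (\<lambda>n. lo \<epsilon> \<le> r n \<and> r n \<le> hi \<epsilon>) sequentially"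
  shows "r \<longlonglongrightarrow> 1"
proof (rule order_tendstoI)
  have small: "eventually (\<lambda>\<epsilon>. 0 < \<epsilon> \<and> \<epsilon> < e0) (at_right (0::real))"
    using e0 by (simp add: eventually_at_right_field) (metis)
  fix y :: real
  show "eventually (\<lambda>n. y < r n) sequentially" if "y < 1"
  proof -
    from order_tendstoD(1)[OF lo that] small
    have "eventually (\<lambda>\<epsilon>. y < lo \<epsilon> \<and> 0 < \<epsilon> \<and> \<epsilon> < e0) (at_right (0::real))"
      by eventually_elim auto
    then obtain \<epsilon> where "y < lo \<epsilon>" "0 < \<epsilon>" "\<epsilon> < e0"
      using eventually_happens[of _ "at_right (0::real)"] by auto
    with bounds[of \<epsilon>] show ?thesis by (auto elim: eventually_mono)
  qed
  show "eventually (\<lambda>n. r n < y) sequentially" if "y > 1"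
  proof -
    from order_tendstoD(2)[OF hi that] small
    have "eventually (\<lambda>\<epsilon>. hi \<epsilon> < y \<and> 0 < \<epsilon> \<and> \<epsilon> < e0) (at_right (0::real))"
      by eventually_elim auto
    then obtain \<epsilon> where "hi \<epsilon> < y" "0 < \<epsilon>" "\<epsilon> < e0"
      using eventually_happens[of _ "at_right (0::real)"] by auto
    with bounds[of \<epsilon>] show ?thesis by (auto elim: eventually_mono)
  qed
qed

lemma sum_bounds_of_antiderivative:
  fixes f F :: "real \<Rightarrow> real"
  assumes deriv: "\<And>x. x > a \<Longrightarrow> (F has_real_derivative - f x) (at x)"
    and antimono: "\<And>x y. a < x \<Longrightarrow> x \<le> y \<Longrightarrow> f y \<le> f x"
    and m: "a < real m" and mn: "m \<le> n"
  shows "F (real m + 1) - F (real n + 1) \<le> (\<Sum>k\<in>{m<..n}. f (real k))"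
    and "(\<Sum>k\<in>{m<..n}. f (real k)) \<le> F (real m) - F (real n)"
proof -
  have telescope: "(\<Sum>k\<in>{m<..n}. g (real k - 1) - g (real k)) = g (real m) - g (real n)"
    for g :: "real \<Rightarrow> real"
    using mn
  proof (induction n rule: dec_induct)
    case (step n)
    then have "{m<..Suc n} = insert (Suc n) {m<..n}" by auto
    then show ?case using step by simp
  qed simp
  have mvt: "\<exists>z. x < z \<and> z < x + 1 \<and> F (x + 1) - F x = - f z" if "x > a" for x
    using MVT2[of x "x + 1" F "\<lambda>z. - f z"] deriv that by force
  have "(\<Sum>k\<in>{m<..n}. F (real k - 1 + 1) - F (real k + 1)) \<le> (\<Sum>k\<in>{m<..n}. f (real k))"
  proof (rule sum_mono)
    fix k assume "k \<in> {m<..n}"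
    then have "real k > a" using m by simp
    with mvt[OF this] antimono show "F (real k - 1 + 1) - F (real k + 1) \<le> f (real k)"
      by (smt (verit) less_imp_le)
  qed
  then show "F (real m + 1) - F (real n + 1) \<le> (\<Sum>k\<in>{m<..n}. f (real k))"
    using telescope[of "\<lambda>x. F (x + 1)"] by simp
  have "(\<Sum>k\<in>{m<..n}. f (real k)) \<le> (\<Sum>k\<in>{m<..n}. F (real k - 1) - F (real k))"
  proof (rule sum_mono)
    fix k assume "k \<in> {m<..n}"
    then have "real k - 1 > a" using m by auto
    with mvt[OF this] antimono show "f (real k) \<le> F (real k - 1) - F (real k)"
      by (smt (verit) less_imp_le)
  qed
  then show "(\<Sum>k\<in>{m<..n}. f (real k)) \<le> F (real m) - F (real n)" using telescope[of F] by simp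
qed

lemma harmonic_block_bounds:
  assumes "1 \<le> m" "m \<le> n"
  shows "ln (real n + 1) - ln (real m + 1) \<le> (\<Sum>k\<in>{m<..n}. 1 / real k)"
    and "(\<Sum>k\<in>{m<..n}. 1 / real k) \<le> ln (real n) - ln (real m)"
proof -
  have deriv: "((\<lambda>x. - ln x) has_real_derivative - (1 / x)) (at x)" if "x > 0" for x
    using that by (auto intro!: derivative_eq_intros)
  have antimono: "1 / y \<le> 1 / x" if "0 < x" "x \<le> y" for x y :: real
    using that by (simp add: frac_le)
  show "ln (real n + 1) - ln (real m + 1) \<le> (\<Sum>k\<in>{m<..n}. 1 / real k)"
    using sum_bounds_of_antiderivative(1)[OF deriv antimono, where m = m and n = n] assms by simp
  show "(\<Sum>k\<in>{m<..n}. 1 / real k) \<le> ln (real n) - ln (real m)"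
    using sum_bounds_of_antiderivative(2)[OF deriv antimono, where m = m and n = n] assms by simp
qed

section \<open>Integer parts of powers and exponentials\<close>

lemma filterlim_nat_floor_powr:
  assumes "t > 0"
  shows "filterlim (\<lambda>n::nat. nat \<lfloor>real n powr t\<rfloor>) sequentially sequentially"
proof -
  have "filterlim (\<lambda>n::nat. real n powr t) at_top sequentially" using assms by real_asymp
  then show ?thesis
    by (intro filterlim_compose[OF filterlim_nat_sequentially]
        filterlim_compose[OF filterlim_floor_sequentially])
qed

lemma ln_ratio_tendsto_of_powr_bounds:
  assumes t: "t > 0"
    and x: "eventually (\<lambda>n. real n powr t - 1 \<le> x n \<and> x n \<le> real n powr t + 1) sequentially"
  shows "(\<lambda>n. ln (x n) / ln (real n)) \<longlonglongrightarrow> t"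
proof (rule tendsto_sandwich[of "\<lambda>n. ln (real n powr t - 1) / ln (real n)" _ _
      "\<lambda>n. ln (real n powr t + 1) / ln (real n)"])
  have "eventually (\<lambda>n::nat. real n powr t \<ge> 2) sequentially" using t by real_asymp
  with x eventually_ge_at_top[of 2]
  have "eventually (\<lambda>n. ln (real n powr t - 1) \<le> ln (x n) \<and> ln (x n) \<le> ln (real n powr t + 1) \<and>
      ln (real n) > 0) sequentially"
    by eventually_elim (auto intro!: ln_mono)
  then show "eventually (\<lambda>n. ln (real n powr t - 1) / ln (real n) \<le> ln (x n) / ln (real n)) sequentially"
    "eventually (\<lambda>n. ln (x n) / ln (real n) \<le> ln (real n powr t + 1) / ln (real n)) sequentially"
    by (auto elim!: eventually_mono intro: divide_right_mono)
  show "(\<lambda>n. ln (real n powr t - 1) / ln (real n)) \<longlonglongrightarrow> t"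
    "(\<lambda>n. ln (real n powr t + 1) / ln (real n)) \<longlonglongrightarrow> t"
    using t by real_asymp+
qed

lemma ln_nat_floor_powr_ratio:
  assumes "t > 0"
  shows "(\<lambda>n. ln (real (nat \<lfloor>real n powr t\<rfloor>)) / ln (real n)) \<longlonglongrightarrow> t"
  by (rule ln_ratio_tendsto_of_powr_bounds[OF assms always_eventually])
    (auto simp: of_nat_nat intro: order_trans[OF of_int_floor_le])

lemma real_nat_ceiling_bounds:
  fixes x :: real
  assumes "x \<ge> 0"
  shows "x \<le> real (nat \<lceil>x\<rceil>)" "real (nat \<lceil>x\<rceil>) \<le> x + 1"
  using ceiling_correct[of x] assms by (simp_all add: of_nat_nat)

lemma nat_floor_powr_nat_ceiling_inverse:
  assumes t: "0 < t" "t < 1"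
  shows "eventually (\<lambda>m. nat \<lfloor>real (nat \<lceil>real m powr (1/t)\<rceil>) powr t\<rfloor> = m) sequentially"
proof -
  have "eventually (\<lambda>m::nat. (real m powr (1/t) + 1) powr t < real m + 1) sequentially"
    using t by real_asymp
  with eventually_ge_at_top[of 1] show ?thesis
  proof eventually_elim
    case (elim m)
    define M where "M = real (nat \<lceil>real m powr (1/t)\<rceil>)"
    have M: "real m powr (1/t) \<le> M" "M \<le> real m powr (1/t) + 1"
      unfolding M_def by (intro real_nat_ceiling_bounds powr_ge_zero)+
    have "real m = (real m powr (1/t)) powr t" using t by (simp add: powr_powr)
    also have "\<dots> \<le> M powr t" using M t by (intro powr_mono2) auto
    finally have "real m \<le> M powr t" .
    moreover have "M powr t \<le> (real m powr (1/t) + 1) powr t"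
      using M t by (intro powr_mono2) (auto intro: order_trans[OF powr_ge_zero])
    then have "M powr t < real m + 1" using elim(2) by linarith
    ultimately have "\<lfloor>M powr t\<rfloor> = int m" by (simp add: floor_eq_iff)
    then show ?case unfolding M_def by simp
  qed
qed

lemma ln_over_ln_gap_floor_powr:
  assumes t: "0 < t" "t < 1"
  shows "(\<lambda>n. ln (real n) / (ln (real n + 1) - ln (real (nat \<lfloor>real n powr t\<rfloor>) + 1))) \<longlonglongrightarrow> 1 / (1 - t)"
proof -
  have "(\<lambda>n. ln (real (nat \<lfloor>real n powr t\<rfloor>) + 1) / ln (real n)) \<longlonglongrightarrow> t"
    using t by (intro ln_ratio_tendsto_of_powr_bounds always_eventually) (auto simp: of_nat_nat, linarith)
  moreover have "(\<lambda>n::nat. ln (real n + 1) / ln (real n)) \<longlonglongrightarrow> 1" by real_asymp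
  ultimately have "(\<lambda>n. 1 / (ln (real n + 1) / ln (real n) - ln (real (nat \<lfloor>real n powr t\<rfloor>) + 1) / ln (real n)))
      \<longlonglongrightarrow> 1 / (1 - t)"
    using t by (intro tendsto_intros) auto
  moreover have "eventually (\<lambda>n. 1 / (ln (real n + 1) / ln (real n) - ln (real (nat \<lfloor>real n powr t\<rfloor>) + 1) / ln (real n))
      = ln (real n) / (ln (real n + 1) - ln (real (nat \<lfloor>real n powr t\<rfloor>) + 1))) sequentially"
    using eventually_ge_at_top[of 2] by eventually_elim (simp add: diff_divide_distrib[symmetric])
  ultimately show ?thesis by (rule Lim_transform_eventually)
qed

lemma ln_over_ln_gap_ceiling_powr:
  assumes t: "0 < t" "t < 1"
  shows "(\<lambda>m. ln (real m) / (ln (real (nat \<lceil>real m powr (1/t)\<rceil>)) - ln (real m))) \<longlonglongrightarrow> 1 / (1 / t - 1)"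
proof -
  have "(\<lambda>m. ln (real (nat \<lceil>real m powr (1/t)\<rceil>)) / ln (real m)) \<longlonglongrightarrow> 1 / t"
  proof (intro ln_ratio_tendsto_of_powr_bounds always_eventually allI)
    fix m :: nat
    show "real m powr (1/t) - 1 \<le> real (nat \<lceil>real m powr (1/t)\<rceil>) \<and>
        real (nat \<lceil>real m powr (1/t)\<rceil>) \<le> real m powr (1/t) + 1"
      using real_nat_ceiling_bounds[OF powr_ge_zero, of m "1/t"] by linarith
  qed (use t in simp)
  then have "(\<lambda>m. 1 / (ln (real (nat \<lceil>real m powr (1/t)\<rceil>)) / ln (real m) - 1)) \<longlonglongrightarrow> 1 / (1 / t - 1)"
    by (rule tendsto_divide[OF tendsto_const tendsto_diff[OF _ tendsto_const]]) (use t in auto)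
  moreover have "eventually (\<lambda>m. 1 / (ln (real (nat \<lceil>real m powr (1/t)\<rceil>)) / ln (real m) - 1) =
      ln (real m) / (ln (real (nat \<lceil>real m powr (1/t)\<rceil>)) - ln (real m))) sequentially"
    using eventually_ge_at_top[of 2] by eventually_elim (simp add: field_simps)
  ultimately show ?thesis by (rule Lim_transform_eventually)
qed

lemma filterlim_power_iterated_square:
  assumes "n \<ge> 2"
  shows "filterlim (\<lambda>J. n ^ (2 ^ J)) sequentially sequentially"
proof (rule filterlim_at_top_mono[OF filterlim_ident], intro always_eventually allI)
  fix J :: nat
  have "J < 2 ^ J" by (rule less_exp)
  also have "(2::nat) ^ J \<le> 2 ^ (2 ^ J)" using less_exp[of J] by (intro power_increasing) auto
  also have "(2::nat) ^ (2 ^ J) \<le> n ^ (2 ^ J)" using assms by (intro power_mono) auto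
  finally show "J \<le> n ^ (2 ^ J)" by simp
qed

definition floor_exp :: "real \<Rightarrow> nat" where
  "floor_exp u = nat \<lfloor>exp u\<rfloor>"

lemma floor_exp_bounds: "real (floor_exp u) \<le> exp u" "exp u < real (floor_exp u) + 1"
  unfolding floor_exp_def by (simp, linarith)

lemma filterlim_floor_exp: "filterlim floor_exp sequentially at_top"
  unfolding floor_exp_def
  by (intro filterlim_compose[OF filterlim_nat_sequentially]
      filterlim_compose[OF filterlim_floor_sequentially] exp_at_top)

lemma filterlim_real_floor_exp: "filterlim (\<lambda>u. real (floor_exp u)) at_top at_top"
  by (rule filterlim_compose[OF filterlim_real_sequentially filterlim_floor_exp])

lemma ln_floor_exp_ratio: "((\<lambda>u. u / ln (real (floor_exp u))) \<longlongrightarrow> 1) at_top"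
proof -
  have "((\<lambda>u. ln (real (floor_exp u)) / u) \<longlongrightarrow> 1) at_top"
  proof (rule tendsto_sandwich[of "\<lambda>u::real. ln (exp u - 1) / u" _ _ "\<lambda>_. 1"])
    have ev: "eventually (\<lambda>u. ln (exp u - 1) \<le> ln (real (floor_exp u)) \<and> ln (real (floor_exp u)) \<le> u
        \<and> u \<ge> 1) at_top"
      using eventually_ge_at_top[of 1]
    proof eventually_elim
      case (elim u)
      then have "exp u - 1 > 0" using exp_ge_add_one_self[of u] by linarith
      moreover have pos: "real (floor_exp u) > 0" using floor_exp_bounds(2)[of u] calculation by linarith
      ultimately have "ln (exp u - 1) \<le> ln (real (floor_exp u))"
        using floor_exp_bounds(2)[of u] by (intro ln_mono) auto
      moreover have "ln (real (floor_exp u)) \<le> ln (exp u)" by (rule ln_mono[OF floor_exp_bounds(1) pos])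
      ultimately show ?case using elim by simp
    qed
    show "eventually (\<lambda>u. ln (exp u - 1) / u \<le> ln (real (floor_exp u)) / u) at_top"
      using ev by eventually_elim (auto intro: divide_right_mono)
    show "eventually (\<lambda>u. ln (real (floor_exp u)) / u \<le> 1) at_top"
      using ev by eventually_elim (auto simp: divide_le_eq)
    show "((\<lambda>u::real. ln (exp u - 1) / u) \<longlongrightarrow> 1) at_top" by real_asymp
  qed simp
  then have "((\<lambda>u. 1 / (ln (real (floor_exp u)) / u)) \<longlongrightarrow> 1 / 1) at_top" by (intro tendsto_intros) auto
  then show ?thesis by simp
qed

section \<open>Slowly varying functions\<close>

lemma measure_lborel_vimage_plus:
  fixes A :: "real set"
  assumes "A \<in> sets borel"
  shows "measure lborel ((\<lambda>x. c + x) -` A) = measure lborel A"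
proof -
  have "measure (distr lborel borel ((+) c)) A = measure lborel ((+) c -` A \<inter> space lborel)"
    by (rule measure_distr) (use assms in auto)
  then show ?thesis by (simp add: lborel_distr_plus)
qed

lemma fmeasurable_lborel_Icc: "{a..b::real} \<in> fmeasurable lborel"
  by (cases "a \<le> b") (auto simp: fmeasurable_def)

lemma large_subsets_meet_after_shift:
  fixes U V :: "real set"
  assumes U: "U \<in> sets lborel" "U \<subseteq> {0..2}" "measure lborel U > 7/4"
    and V: "V \<in> sets lborel" "V \<subseteq> {0..2}" "measure lborel V > 7/4"
    and c: "0 \<le> c" "c \<le> 1"
  shows "\<exists>v\<in>U. v - c \<in> V"
proof -
  define A where "A = U \<inter> {c..2}"
  define B where "B = (\<lambda>v. - c + v) -` (V \<inter> {0..2-c})"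
  have A: "A \<in> fmeasurable lborel"
    unfolding A_def using U by (intro fmeasurableI2[OF fmeasurable_lborel_Icc[of c 2]]) auto
  have B_sets: "B \<in> sets lborel"
    unfolding B_def using V(1) by (simp add: measurable_sets_borel[of "\<lambda>v. - c + v"])
  have B: "B \<in> fmeasurable lborel" "B \<subseteq> {c..2}"
    unfolding B_def using V B_sets by (auto intro!: fmeasurableI2[OF fmeasurable_lborel_Icc[of c 2]])
  have "measure lborel U \<le> measure lborel (A \<union> {0..c})"
    using U A c by (intro measure_mono_fmeasurable fmeasurableI2[OF fmeasurable_lborel_Icc[of 0 2]])
      (auto simp: A_def)
  also have "\<dots> \<le> measure lborel A + measure lborel {0..c}" by (rule measure_Un_le) (use A in auto)
  finally have mA: "measure lborel U \<le> measure lborel A + c" using c by simp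
  have "measure lborel V \<le> measure lborel ((V \<inter> {0..2-c}) \<union> {2-c..2})"
    using V c by (intro measure_mono_fmeasurable fmeasurableI2[OF fmeasurable_lborel_Icc[of 0 2]]) auto
  also have "\<dots> \<le> measure lborel (V \<inter> {0..2-c}) + measure lborel {2-c..2}"
    by (rule measure_Un_le) (use V in auto)
  also have "measure lborel (V \<inter> {0..2-c}) = measure lborel B"
    unfolding B_def using V(1) by (intro measure_lborel_vimage_plus[symmetric]) simp
  finally have mB: "measure lborel V \<le> measure lborel B + c" using c by simp
  have "A \<inter> B \<noteq> {}"
  proof
    assume "A \<inter> B = {}"
    then have "measure lborel (A \<union> B) = measure lborel A + measure lborel B"
      using A B by (intro measure_Union) (auto simp: fmeasurable_def)
    moreover have "measure lborel (A \<union> B) \<le> measure lborel {c..2}"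
      using A B U(1) B_sets by (intro measure_mono_fmeasurable fmeasurable_lborel_Icc) (auto simp: A_def)
    ultimately show False using mA mB U V c by simp
  qed
  then show ?thesis unfolding A_def B_def by auto
qed

lemma large_set_of_small_increments:
  fixes h :: "real \<Rightarrow> real" and z :: "nat \<Rightarrow> real"
  assumes meas[measurable]: "h \<in> borel_measurable borel"
    and pw: "\<And>u. 0 \<le> u \<Longrightarrow> u \<le> 2 \<Longrightarrow> ((\<lambda>x. h (x + u) - h x) \<longlongrightarrow> 0) at_top"
    and z: "filterlim z at_top sequentially" and \<delta>: "\<delta> > 0"
  shows "\<exists>k. measure lborel {v \<in> {0..2}. \<forall>n\<ge>k. \<bar>h (z n + v) - h (z n)\<bar> < \<delta>} > 7/4"
proof -
  define U where "U k = {v \<in> {0..2}. \<forall>n\<ge>k. \<bar>h (z n + v) - h (z n)\<bar> < \<delta>}" for k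
  have Us: "U k \<in> sets lborel" for k unfolding U_def by measurable
  have inc: "incseq U" unfolding incseq_def U_def by auto
  have Un: "(\<Union>k. U k) = {0..2}"
  proof
    show "(\<Union>k. U k) \<subseteq> {0..2}" unfolding U_def by auto
    show "{0..2} \<subseteq> (\<Union>k. U k)"
    proof
      fix v :: real assume v: "v \<in> {0..2}"
      have "(\<lambda>n. h (z n + v) - h (z n)) \<longlonglongrightarrow> 0"
        using filterlim_compose[OF pw z] v by auto
      then have "eventually (\<lambda>n. \<bar>h (z n + v) - h (z n)\<bar> < \<delta>) sequentially"
        using \<delta> by (auto simp: tendsto_iff dist_real_def)
      then obtain k where "\<forall>n\<ge>k. \<bar>h (z n + v) - h (z n)\<bar> < \<delta>"
        by (auto simp: eventually_sequentially)
      then show "v \<in> (\<Union>k. U k)" using v unfolding U_def by auto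
    qed
  qed
  have "(\<lambda>k. measure lborel (U k)) \<longlonglongrightarrow> measure lborel (\<Union>k. U k)"
    by (rule Lim_measure_incseq) (use Us inc Un in auto)
  then have "(\<lambda>k. measure lborel (U k)) \<longlonglongrightarrow> 2" unfolding Un by simp
  then have "eventually (\<lambda>k. measure lborel (U k) > 7/4) sequentially"
    by (rule order_tendstoD) simp
  then obtain k where "measure lborel (U k) > 7/4" by (auto simp: eventually_sequentially)
  then show ?thesis unfolding U_def by blast
qed

text \<open>Karamata's uniform convergence theorem, in additive form; the proof is the
  measure-theoretic argument of Csiszar and Erdos.\<close>

lemma uniform_convergence_of_increments:
  fixes h :: "real \<Rightarrow> real"
  assumes meas[measurable]: "h \<in> borel_measurable borel"
    and pw: "\<And>u. 0 \<le> u \<Longrightarrow> u \<le> 2 \<Longrightarrow> ((\<lambda>x. h (x + u) - h x) \<longlongrightarrow> 0) at_top"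
    and \<epsilon>: "\<epsilon> > 0"
  shows "\<exists>X. \<forall>x\<ge>X. \<forall>u. 0 \<le> u \<and> u \<le> 1 \<longrightarrow> \<bar>h (x + u) - h x\<bar> < \<epsilon>"
proof (rule ccontr)
  assume "\<not> ?thesis"
  then have "\<forall>n::nat. \<exists>x u. x \<ge> real n \<and> 0 \<le> u \<and> u \<le> 1 \<and> \<bar>h (x + u) - h x\<bar> \<ge> \<epsilon>"
    by (metis not_less)
  then obtain x u where xu: "\<And>n. x n \<ge> real n" "\<And>n. 0 \<le> u n" "\<And>n. u n \<le> 1"
    and bad: "\<And>n. \<bar>h (x n + u n) - h (x n)\<bar> \<ge> \<epsilon>"
    by metis
  define y where "y n = x n + u n" for n
  have "filterlim x at_top sequentially"
    by (rule filterlim_at_top_mono[OF filterlim_real_sequentially]) (use xu in auto)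
  then obtain k1 where k1: "measure lborel {v \<in> {0..2}. \<forall>n\<ge>k1. \<bar>h (x n + v) - h (x n)\<bar> < \<epsilon>/2} > 7/4"
    using large_set_of_small_increments[OF meas pw, of x "\<epsilon>/2"] \<epsilon> by auto
  have "filterlim y at_top sequentially"
    by (rule filterlim_at_top_mono[OF filterlim_real_sequentially])
      (use xu in \<open>auto simp: y_def intro!: always_eventually add_increasing2\<close>)
  then obtain k2 where k2: "measure lborel {v \<in> {0..2}. \<forall>n\<ge>k2. \<bar>h (y n + v) - h (y n)\<bar> < \<epsilon>/2} > 7/4"
    using large_set_of_small_increments[OF meas pw, of y "\<epsilon>/2"] \<epsilon> by auto
  define n where "n = max k1 k2"
  have sets: "{v \<in> {0..2}. \<forall>n\<ge>k. \<bar>h (z n + v) - h (z n)\<bar> < \<epsilon>/2} \<in> sets lborel"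
    for k :: nat and z by measurable
  obtain v where "v \<in> {v \<in> {0..2}. \<forall>n\<ge>k1. \<bar>h (x n + v) - h (x n)\<bar> < \<epsilon>/2}"
    "v - u n \<in> {v \<in> {0..2}. \<forall>n\<ge>k2. \<bar>h (y n + v) - h (y n)\<bar> < \<epsilon>/2}"
    using large_subsets_meet_after_shift[OF sets _ k1 sets _ k2, of "u n"] xu by blast
  then have v: "\<bar>h (x n + v) - h (x n)\<bar> < \<epsilon>/2" "\<bar>h (y n + (v - u n)) - h (y n)\<bar> < \<epsilon>/2"
    unfolding n_def by auto
  have "y n + (v - u n) = x n + v" unfolding y_def by simp
  with v(2) have "\<bar>h (x n + v) - h (y n)\<bar> < \<epsilon>/2" by simp
  with v(1) have "\<bar>h (y n) - h (x n)\<bar> < \<epsilon>" by linarith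
  then show False using bad[of n] unfolding y_def by simp
qed

lemma slowly_varying_eventually_pos: "slowly_varying L \<Longrightarrow> \<exists>A. \<forall>x\<ge>A. L x > 0"
  unfolding slowly_varying_def by blast

lemma slowly_varying_tendsto: "slowly_varying L \<Longrightarrow> c > 0 \<Longrightarrow> ((\<lambda>x. L (c * x) / L x) \<longlongrightarrow> 1) at_top"
  unfolding slowly_varying_def by blast

lemma slowly_varying_uniform_ln:
  assumes sv: "slowly_varying L" and \<epsilon>: "\<epsilon> > 0"
  shows "\<exists>X. \<forall>x\<ge>X. L (exp x) > 0 \<and>
           (\<forall>u. 0 \<le> u \<and> u \<le> 1 \<longrightarrow> \<bar>ln (L (exp (x + u))) - ln (L (exp x))\<bar> < \<epsilon>)"
proof -
  obtain A where A: "\<And>x. x \<ge> A \<Longrightarrow> L x > 0"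
    and meas: "(\<lambda>x. if A \<le> x then L x else 0) \<in> borel_measurable borel"
    using sv unfolding slowly_varying_def by blast
  define L' where "L' x = (if A \<le> x then L x else 0)" for x
  have [measurable]: "L' \<in> borel_measurable borel" using meas unfolding L'_def .
  define h where "h x = ln (L' (exp x))" for x
  have [measurable]: "h \<in> borel_measurable borel" unfolding h_def by measurable
  define X0 where "X0 = ln (max A 1)"
  have X0: "A \<le> exp x" if "x \<ge> X0" for x
    using exp_le_cancel_iff[of "ln (max A 1)" x] that unfolding X0_def by simp
  have h: "h x = ln (L (exp x))" "L (exp x) > 0" if "x \<ge> X0" for x
    using X0[OF that] A unfolding h_def L'_def by auto
  have "((\<lambda>x. h (x + u) - h x) \<longlongrightarrow> 0) at_top" if "0 \<le> u" for u
  proof -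
    have "((\<lambda>x. L (exp u * exp x) / L (exp x)) \<longlongrightarrow> 1) at_top"
      by (rule filterlim_compose[OF slowly_varying_tendsto[OF sv] exp_at_top]) simp
    then have "((\<lambda>x. ln (L (exp u * exp x) / L (exp x))) \<longlongrightarrow> ln 1) at_top"
      by (intro tendsto_ln) auto
    moreover have "eventually (\<lambda>x. ln (L (exp u * exp x) / L (exp x)) = h (x + u) - h x) at_top"
      using eventually_ge_at_top[of X0]
    proof eventually_elim
      case (elim x)
      then show ?case using h[of x] h[of "x + u"] that by (simp add: exp_add ln_div mult.commute)
    qed
    ultimately show ?thesis by (simp add: tendsto_cong)
  qed
  from uniform_convergence_of_increments[OF _ this \<epsilon>] obtain X where
    X: "\<And>x u. x \<ge> X \<Longrightarrow> 0 \<le> u \<Longrightarrow> u \<le> 1 \<Longrightarrow> \<bar>h (x + u) - h x\<bar> < \<epsilon>"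
    by auto
  show ?thesis
  proof (intro exI[of _ "max X X0"] allI impI conjI)
    fix x assume x: "max X X0 \<le> x"
    then show "L (exp x) > 0" using h(2) by simp
    fix u :: real assume u: "0 \<le> u \<and> u \<le> 1"
    show "\<bar>ln (L (exp (x + u))) - ln (L (exp x))\<bar> < \<epsilon>"
      using X[of x u] h(1)[of x] h(1)[of "x + u"] x u by simp
  qed
qed

lemma slowly_varying_uniform:
  assumes sv: "slowly_varying L" and \<epsilon>: "\<epsilon> > 0"
  shows "\<exists>Y>0. \<forall>z\<ge>Y. L z > 0 \<and> (\<forall>c. 1 \<le> c \<and> c \<le> 2 \<longrightarrow> \<bar>L (c * z) / L z - 1\<bar> < \<epsilon>)"
proof -
  obtain X where X: "\<And>x u. x \<ge> X \<Longrightarrow> 0 \<le> u \<Longrightarrow> u \<le> 1 \<Longrightarrow>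
      L (exp x) > 0 \<and> \<bar>ln (L (exp (x + u))) - ln (L (exp x))\<bar> < ln (1 + \<epsilon>)"
    using slowly_varying_uniform_ln[OF sv, of "ln (1 + \<epsilon>)"] \<epsilon> by auto
  show ?thesis
  proof (intro exI[of _ "exp X"] conjI allI impI)
    fix z :: real assume z: "z \<ge> exp X"
    have zpos: "z > 0" using z exp_gt_zero[of X] by linarith
    have x: "ln z \<ge> X" using z zpos by (simp add: ln_ge_iff)
    show "L z > 0" using X[OF x, of 0] zpos by simp
    fix c :: real assume c: "1 \<le> c \<and> c \<le> 2"
    have u: "0 \<le> ln c" "ln c \<le> 1" using c ln_2_less_1 by (auto intro: order_trans[OF ln_mono[of c 2]])
    have e: "exp (ln z + ln c) = c * z" "exp (ln z) = z" using c zpos by (simp_all add: exp_add)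
    have "ln z + ln c \<ge> X" using x u by simp
    from X[OF x u] X[OF this, of 0] have "\<bar>ln (L (c * z) / L z)\<bar> < ln (1 + \<epsilon>)" "L (c * z) > 0" "L z > 0"
      unfolding e by (simp_all add: ln_div)
    then show "\<bar>L (c * z) / L z - 1\<bar> < \<epsilon>"
      using \<epsilon> by (intro abs_minus_1_lt_of_abs_ln_lt) auto
  qed simp
qed

lemma slowly_varying_ratio_tendsto_1:
  assumes sv: "slowly_varying L" and u: "filterlim u at_top F"
    and v: "((\<lambda>x. v x / u x) \<longlongrightarrow> 1) F"
  shows "((\<lambda>x. L (v x) / L (u x)) \<longlongrightarrow> 1) F"
  unfolding tendsto_iff dist_real_def
proof (intro allI impI)
  fix e :: real assume e: "e > 0"
  define \<epsilon> where "\<epsilon> = min (e/2) (1/2)"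
  have \<epsilon>: "\<epsilon> > 0" "2 * \<epsilon> \<le> e" "\<epsilon> \<le> 1/2" unfolding \<epsilon>_def using e by auto
  obtain Y where Y: "Y > 0"
    "\<And>z. z \<ge> Y \<Longrightarrow> L z > 0 \<and> (\<forall>c. 1 \<le> c \<and> c \<le> 2 \<longrightarrow> \<bar>L (c * z) / L z - 1\<bar> < \<epsilon>)"
    using slowly_varying_uniform[OF sv \<epsilon>(1)] by blast
  have close: "\<bar>L z' / L z - 1\<bar> < \<epsilon>" if "Y \<le> z" "z \<le> z'" "z' \<le> 2 * z" for z z'
    using Y(2)[OF that(1)] that Y(1) by (auto dest!: spec[of _ "z' / z"] simp: field_simps)
  have "eventually (\<lambda>x. u x \<ge> 2 * Y) F" using u by (simp add: filterlim_at_top)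
  moreover have "eventually (\<lambda>x. 1/2 < v x / u x \<and> v x / u x < 3/2) F"
    using order_tendstoD(1)[OF v, of "1/2"] order_tendstoD(2)[OF v, of "3/2"]
    by (auto elim: eventually_elim2)
  ultimately show "eventually (\<lambda>x. \<bar>L (v x) / L (u x) - 1\<bar> < e) F"
  proof eventually_elim
    case (elim x)
    then have u_pos: "u x > 0" using Y by linarith
    then have vu: "u x / 2 < v x" "v x < 3/2 * u x" using elim by (auto simp: field_simps)
    show ?case
    proof (cases "u x \<le> v x")
      case True
      then show ?thesis using close[of "u x" "v x"] elim vu \<epsilon> by auto
    next
      case False
      then have "\<bar>L (u x) / L (v x) - 1\<bar> < \<epsilon>" using close[of "v x" "u x"] elim vu by auto
      then have "\<bar>1 / (L (u x) / L (v x)) - 1\<bar> < 2 * \<epsilon>" using \<epsilon> by (intro abs_inverse_minus_1_lt)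
      then show ?thesis using \<epsilon> by simp
    qed
  qed
qed

lemma slowly_varying_ratio_tendsto:
  assumes sv: "slowly_varying L" and u: "filterlim u at_top F"
    and v: "((\<lambda>x. v x / u x) \<longlongrightarrow> c) F" and c: "c > 0"
  shows "((\<lambda>x. L (v x) / L (u x)) \<longlongrightarrow> 1) F"
proof -
  have cu: "filterlim (\<lambda>x. c * u x) at_top F"
    using c by (intro filterlim_tendsto_pos_mult_at_top[OF tendsto_const _ u])
  have "((\<lambda>x. v x / u x / c) \<longlongrightarrow> c / c) F" using c by (intro tendsto_divide v) auto
  then have "((\<lambda>x. v x / (c * u x)) \<longlongrightarrow> 1) F" using c by (simp add: field_simps)
  from tendsto_mult[OF slowly_varying_ratio_tendsto_1[OF sv cu this]
      filterlim_compose[OF slowly_varying_tendsto[OF sv c] u]]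
  have lim: "((\<lambda>x. L (v x) / L (c * u x) * (L (c * u x) / L (u x))) \<longlongrightarrow> 1) F" by simp
  obtain A where A: "\<And>x. x \<ge> A \<Longrightarrow> L x > 0" using slowly_varying_eventually_pos[OF sv] by blast
  have "eventually (\<lambda>x. c * u x \<ge> A) F" using cu by (simp add: filterlim_at_top)
  then have "eventually (\<lambda>x. L (v x) / L (c * u x) * (L (c * u x) / L (u x)) = L (v x) / L (u x)) F"
    by eventually_elim (auto dest!: A)
  with lim show ?thesis by (rule Lim_transform_eventually)
qed

lemma slowly_varying_ln_square_block:
  assumes sv: "slowly_varying L" and \<epsilon>: "\<epsilon> > 0"
  shows "eventually (\<lambda>n. L (ln (real n)) > 0 \<and>
    (\<forall>k\<in>{n<..n^2}. \<bar>L (ln (real k)) - L (ln (real n))\<bar> \<le> \<epsilon> * L (ln (real n)))) sequentially"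
proof -
  obtain Y where Y: "\<And>z. z \<ge> Y \<Longrightarrow> L z > 0 \<and> (\<forall>c. 1 \<le> c \<and> c \<le> 2 \<longrightarrow> \<bar>L (c * z) / L z - 1\<bar> < \<epsilon>)"
    using slowly_varying_uniform[OF sv \<epsilon>] by blast
  have "filterlim (\<lambda>n::nat. ln (real n)) at_top sequentially" by real_asymp
  then have "eventually (\<lambda>n::nat. ln (real n) \<ge> Y) sequentially" by (simp add: filterlim_at_top)
  with eventually_ge_at_top[of 2] show ?thesis
  proof eventually_elim
    case (elim n)
    have L_pos: "L (ln (real n)) > 0" using Y elim by blast
    have "\<bar>L (ln (real k)) - L (ln (real n))\<bar> \<le> \<epsilon> * L (ln (real n))" if k: "k \<in> {n<..n^2}" for k
    proof -
      have ln_pos: "ln (real n) > 0" using elim by simp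
      have "ln (real n) < ln (real k)" "real k \<le> real n ^ 2"
        using k elim by (auto simp flip: of_nat_power)
      moreover have "ln (real n ^ 2) = 2 * ln (real n)" using elim by (simp add: ln_realpow)
      moreover have "ln (real k) \<le> ln (real n ^ 2)"
        using \<open>real k \<le> real n ^ 2\<close> k elim by (subst ln_le_cancel_iff) auto
      ultimately have c: "1 \<le> ln (real k) / ln (real n)" "ln (real k) / ln (real n) \<le> 2"
        using ln_pos by (auto simp: field_simps)
      have "\<bar>L (ln (real k)) / L (ln (real n)) - 1\<bar> < \<epsilon>"
        using Y[OF elim(2)] c ln_pos by (auto dest!: spec[of _ "ln (real k) / ln (real n)"])
      then show ?thesis using L_pos by (simp add: abs_le_iff field_simps less_imp_le)
    qed
    with L_pos show ?case by blast
  qed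
qed

section \<open>Tails of summable sequences\<close>

definition tail_sum :: "(nat \<Rightarrow> real) \<Rightarrow> real \<Rightarrow> real" where
  "tail_sum a x = (\<Sum>k. if real k > x then a k else 0)"

locale tail_seq =
  fixes a :: "nat \<Rightarrow> real"
  assumes nonneg: "\<And>k. a k \<ge> 0" and summable: "summable a"
    and eventually_pos: "eventually (\<lambda>k. a k > 0) sequentially"
begin

definition tail_ratio :: "real \<Rightarrow> nat \<Rightarrow> real" where
  "tail_ratio t n = tail_sum a (real n powr t) / tail_sum a (real n)"

lemma summable_tail: "summable (\<lambda>k. if real k > x then a k else 0)"
  by (rule summable_comparison_test'[OF summable, of 0]) (use nonneg in auto)

lemma tail_sum_nonneg: "tail_sum a x \<ge> 0"
  unfolding tail_sum_def by (rule suminf_nonneg[OF summable_tail]) (use nonneg in auto)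

lemma tail_sum_antimono: "x \<le> y \<Longrightarrow> tail_sum a y \<le> tail_sum a x"
  unfolding tail_sum_def by (rule suminf_le[OF _ summable_tail summable_tail]) (use nonneg in auto)

lemma tail_sum_pos: "tail_sum a x > 0"
proof -
  obtain K where K: "\<And>k. k \<ge> K \<Longrightarrow> a k > 0"
    using eventually_pos by (auto simp: eventually_at_top_linorder)
  define k where "k = max K (nat \<lceil>x\<rceil> + 1)"
  have "real k > x" "a k > 0" using K unfolding k_def by auto linarith
  then have "\<exists>i. 0 < (if real i > x then a i else 0)" by (intro exI[of _ k]) simp
  then show ?thesis unfolding tail_sum_def
    by (subst suminf_pos_iff[OF summable_tail]) (use nonneg in auto)
qed

lemma tail_sum_nat_floor:
  assumes "x \<ge> 0"
  shows "tail_sum a x = tail_sum a (real (nat \<lfloor>x\<rfloor>))"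
proof -
  have "real k > x \<longleftrightarrow> real k > real (nat \<lfloor>x\<rfloor>)" for k
  proof -
    have "real k > x \<longleftrightarrow> \<lfloor>x\<rfloor> < int k" by (simp add: floor_less_iff)
    moreover have "real (nat \<lfloor>x\<rfloor>) = of_int \<lfloor>x\<rfloor>" using assms by simp
    ultimately show ?thesis by (metis of_int_less_iff of_int_of_nat_eq)
  qed
  then show ?thesis unfolding tail_sum_def by simp
qed

lemma tail_sum_split:
  assumes "m \<le> n"
  shows "tail_sum a (real m) = (\<Sum>k\<in>{m<..n}. a k) + tail_sum a (real n)"
proof -
  have split: "(\<lambda>k. if real k > real m then a k else 0) =
      (\<lambda>k. (if k \<in> {m<..n} then a k else 0) + (if real k > real n then a k else 0))"
    using assms by (auto simp: fun_eq_iff)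
  have "(\<Sum>k. if k \<in> {m<..n} then a k else 0) = (\<Sum>k\<in>{m<..n}. a k)"
    by (subst suminf_finite[of "{m<..n}"]) auto
  then show ?thesis unfolding tail_sum_def split
    by (subst suminf_add[symmetric, OF summable_finite[of "{m<..n}"] summable_tail]) auto
qed

lemma tail_sum_tendsto_0: "(\<lambda>n. tail_sum a (real n)) \<longlonglongrightarrow> 0"
proof -
  have "tail_sum a (real n) = suminf a - (\<Sum>k\<le>n. a k)" for n
  proof -
    have "tail_sum a (real 0) = (\<Sum>k. a (Suc k))"
      unfolding tail_sum_def using suminf_split_head[OF summable_tail, of 0] by simp
    also have "\<dots> = suminf a - a 0" by (rule suminf_split_head[OF summable])
    finally have "suminf a - a 0 = (\<Sum>k\<in>{0<..n}. a k) + tail_sum a (real n)"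
      using tail_sum_split[of 0 n] by simp
    moreover have "{..n} = insert 0 {0<..n}" by auto
    ultimately show ?thesis by simp
  qed
  moreover have "(\<lambda>n. suminf a - (\<Sum>k\<le>n. a k)) \<longlonglongrightarrow> suminf a - suminf a"
    by (intro tendsto_intros summable_LIMSEQ'[OF summable])
  ultimately show ?thesis by simp
qed

end

section \<open>Power-law limits of the tail ratio\<close>

context
  fixes \<phi> :: "real \<Rightarrow> real"
  assumes mono: "\<And>a b. 0 < a \<Longrightarrow> a \<le> b \<Longrightarrow> \<phi> a \<le> \<phi> b"
    and nonneg: "\<And>a. a > 0 \<Longrightarrow> \<phi> a \<ge> 0"
    and subadditive: "\<And>a b. a > 0 \<Longrightarrow> b > 0 \<Longrightarrow> \<phi> (a + b) \<le> \<phi> a + \<phi> b"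
    and superadditive_below: "\<And>a' a b. 0 < a' \<Longrightarrow> a' < a \<Longrightarrow> b > 0 \<Longrightarrow> \<phi> a' + \<phi> b \<le> \<phi> (a + b)"
begin

private lemma le_mult_Suc: "a > 0 \<Longrightarrow> \<phi> (real (Suc n) * a) \<le> real (Suc n) * \<phi> a"
proof (induction n)
  case (Suc n)
  have "\<phi> (real (Suc (Suc n)) * a) = \<phi> (a + real (Suc n) * a)" by (simp add: algebra_simps)
  also have "\<dots> \<le> \<phi> a + \<phi> (real (Suc n) * a)" using Suc by (intro subadditive) auto
  also have "\<dots> \<le> \<phi> a + real (Suc n) * \<phi> a" using Suc by simp
  finally show ?case by (simp add: algebra_simps)
qed simp

private lemma mult_Suc_le: "0 < a' \<Longrightarrow> a' < a \<Longrightarrow> real (Suc n) * \<phi> a' \<le> \<phi> (real (Suc n) * a)"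
proof (induction n)
  case 0 then show ?case using mono by simp
next
  case (Suc n)
  have "real (Suc (Suc n)) * \<phi> a' = \<phi> a' + real (Suc n) * \<phi> a'" by (simp add: algebra_simps)
  also have "\<dots> \<le> \<phi> a' + \<phi> (real (Suc n) * a)" using Suc by simp
  also have "\<dots> \<le> \<phi> (a + real (Suc n) * a)" using Suc by (intro superadditive_below) auto
  finally show ?case by (simp add: algebra_simps)
qed

private lemma le_linear:
  assumes "a > 0" "b > 0"
  shows "\<phi> a \<le> a * (\<phi> b / b)"
proof -
  have bound: "\<phi> a \<le> a * (\<phi> b / b) + (1 / b + 1) * \<phi> b / real (Suc n)" for n
  proof -
    define N where "N = real (Suc n)"
    define m where "m = nat \<lceil>(N * a + 1) / b\<rceil>"
    have N: "N > 0" unfolding N_def by simp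
    have m: "(N * a + 1) / b \<le> real m" "real m \<le> (N * a + 1) / b + 1"
      unfolding m_def using assms N by (simp_all add: of_nat_nat)
    then obtain m' where m': "m = Suc m'"
      using assms N by (metis gr0_conv_Suc less_le_trans of_nat_0_less_iff pos_add_strict
          divide_pos_pos mult_pos_pos zero_less_one)
    have "N * \<phi> a \<le> \<phi> (N * (a + 1 / N))" unfolding N_def using assms by (intro mult_Suc_le) auto
    also have "\<dots> \<le> \<phi> (real m * b)"
    proof (rule mono)
      have "N * (a + 1 / N) = N * a + 1" using N by (simp add: field_simps)
      then show "N * (a + 1 / N) \<le> real m * b"
        using m(1) assms by (simp add: pos_divide_le_eq mult.commute)
      show "0 < N * (a + 1 / N)" using N assms by (intro mult_pos_pos add_pos_pos) auto
    qed
    also have "\<dots> \<le> real m * \<phi> b" using le_mult_Suc[of b m'] assms m' by simp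
    also have "\<dots> \<le> ((N * a + 1) / b + 1) * \<phi> b" using m nonneg[of b] assms by (intro mult_right_mono) auto
    finally have "N * \<phi> a \<le> ((N * a + 1) / b + 1) * \<phi> b" .
    then show ?thesis using N assms unfolding N_def[symmetric] by (simp add: field_simps)
  qed
  have "(\<lambda>n. a * (\<phi> b / b) + (1 / b + 1) * \<phi> b / real (Suc n)) \<longlonglongrightarrow> a * (\<phi> b / b) + 0"
    by (intro tendsto_intros LIMSEQ_Suc[OF lim_const_over_n])
  then show ?thesis using bound by (intro LIMSEQ_le_const[of _ "a * (\<phi> b / b)"]) auto
qed

lemma linear_of_near_additive: "\<exists>\<gamma>\<ge>0. \<forall>u>0. \<phi> u = \<gamma> * u"
proof (intro exI[of _ "\<phi> 1"] conjI allI impI)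
  show "\<phi> 1 \<ge> 0" using nonneg by simp
  fix u :: real assume u: "u > 0"
  have "\<phi> u \<le> u * \<phi> 1" using le_linear[of u 1] u by simp
  moreover have "\<phi> 1 \<le> \<phi> u / u" using le_linear[of 1 u] u by simp
  ultimately show "\<phi> u = \<phi> 1 * u" using u by (simp add: field_simps)
qed

end

lemma power_law_of_near_multiplicative:
  fixes g :: "real \<Rightarrow> real"
  assumes ge_1: "\<And>t. 0 < t \<Longrightarrow> t < 1 \<Longrightarrow> g t \<ge> 1"
    and antimono: "\<And>s t. 0 < s \<Longrightarrow> s \<le> t \<Longrightarrow> t < 1 \<Longrightarrow> g t \<le> g s"
    and submult: "\<And>s t. 0 < s \<Longrightarrow> s < 1 \<Longrightarrow> 0 < t \<Longrightarrow> t < 1 \<Longrightarrow> g (s * t) \<le> g s * g t"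
    and supermult_above: "\<And>s s' t. 0 < s \<Longrightarrow> s < s' \<Longrightarrow> s' < 1 \<Longrightarrow> 0 < t \<Longrightarrow> t < 1 \<Longrightarrow>
        g s' * g t \<le> g (s * t)"
  shows "\<exists>\<gamma>\<ge>0. \<forall>t. 0 < t \<and> t < 1 \<longrightarrow> g t = t powr (- \<gamma>)"
proof -
  define \<phi> where "\<phi> u = ln (g (exp (- u)))" for u
  have exp_less_1: "exp (- u) < 1" if "u > 0" for u :: real using that by simp
  have g_ge_1: "g (exp (- u)) \<ge> 1" if "u > 0" for u using ge_1 exp_less_1[OF that] by simp
  then have g_pos: "g (exp (- u)) > 0" if "u > 0" for u using that by fastforce
  have exp_minus_add: "exp (- (a + b)) = exp (- a) * exp (- b)" for a b :: real
    by (simp add: exp_add[symmetric])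
  have "\<exists>\<gamma>\<ge>0. \<forall>u>0. \<phi> u = \<gamma> * u"
  proof (rule linear_of_near_additive)
    show "\<phi> a \<le> \<phi> b" if "0 < a" "a \<le> b" for a b
      using that g_pos antimono exp_less_1 unfolding \<phi>_def by simp
    show "\<phi> a \<ge> 0" if "a > 0" for a using g_ge_1[OF that] unfolding \<phi>_def by simp
    show "\<phi> (a + b) \<le> \<phi> a + \<phi> b" if "a > 0" "b > 0" for a b
    proof -
      have "g (exp (- (a + b))) \<le> g (exp (- a)) * g (exp (- b))"
        using submult[of "exp (- a)" "exp (- b)"] that by (simp only: exp_minus_add) simp
      then show ?thesis
        unfolding \<phi>_def using g_pos[of a] g_pos[of b] g_pos[of "a + b"] that
        by (subst ln_mult_pos[symmetric]) auto
    qed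
    show "\<phi> a' + \<phi> b \<le> \<phi> (a + b)" if "0 < a'" "a' < a" "b > 0" for a' a b
    proof -
      have "g (exp (- a')) * g (exp (- b)) \<le> g (exp (- (a + b)))"
        using supermult_above[of "exp (- a)" "exp (- a')" "exp (- b)"] that
        by (simp only: exp_minus_add) simp
      then show ?thesis
        unfolding \<phi>_def using g_pos[of a'] g_pos[of b] g_pos[of "a + b"] that
        by (subst ln_mult_pos[symmetric]) auto
    qed
  qed
  then obtain \<gamma> where \<gamma>: "\<gamma> \<ge> 0" "\<And>u. u > 0 \<Longrightarrow> \<phi> u = \<gamma> * u" by blast
  have "g t = t powr (- \<gamma>)" if t: "0 < t" "t < 1" for t
  proof -
    have "g t = exp (\<phi> (- ln t))" unfolding \<phi>_def using ge_1[OF t] t by simp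
    also have "\<dots> = t powr (- \<gamma>)" using \<gamma>(2)[of "- ln t"] t by (simp add: powr_def)
    finally show ?thesis .
  qed
  with \<gamma>(1) show ?thesis by blast
qed

context tail_seq
begin

lemma tail_ratio_antimono:
  assumes "0 < s" "s \<le> t" "n \<ge> 1"
  shows "tail_ratio t n \<le> tail_ratio s n"
proof -
  have "tail_sum a (real n powr t) \<le> tail_sum a (real n powr s)"
    using assms by (intro tail_sum_antimono powr_mono) auto
  then show ?thesis unfolding tail_ratio_def by (rule divide_right_mono[OF _ tail_sum_nonneg])
qed

lemma tail_ratio_ge_1:
  assumes "0 < t" "t \<le> 1" "n \<ge> 1"
  shows "tail_ratio t n \<ge> 1"
proof -
  have "tail_ratio 1 n = 1" unfolding tail_ratio_def using assms tail_sum_pos[of "real n"] by simp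
  with tail_ratio_antimono[of t 1 n] assms show ?thesis by simp
qed

lemma tail_ratio_compose:
  "tail_ratio s (nat \<lfloor>real n powr t\<rfloor>) * tail_ratio t n =
     tail_sum a (real (nat \<lfloor>real n powr t\<rfloor>) powr s) / tail_sum a (real n)"
  unfolding tail_ratio_def tail_sum_nat_floor[of "real n powr t", OF powr_ge_zero]
  using tail_sum_pos[of "real (nat \<lfloor>real n powr t\<rfloor>)"] by simp

lemma tail_ratio_mult_le:
  assumes "s > 0"
  shows "tail_ratio (s * t) n \<le> tail_ratio s (nat \<lfloor>real n powr t\<rfloor>) * tail_ratio t n"
proof -
  have "real (nat \<lfloor>real n powr t\<rfloor>) powr s \<le> (real n powr t) powr s"
    using assms by (intro powr_mono2) auto
  also have "\<dots> = real n powr (s * t)" by (simp add: powr_powr mult.commute)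
  finally show ?thesis
    unfolding tail_ratio_compose unfolding tail_ratio_def
    by (rule divide_right_mono[OF tail_sum_antimono tail_sum_nonneg])
qed

lemma tail_ratio_mult_ge:
  assumes "0 < s" "s < s'" "t > 0"
  shows "eventually (\<lambda>n. tail_ratio s' (nat \<lfloor>real n powr t\<rfloor>) * tail_ratio t n \<le> tail_ratio (s * t) n)
    sequentially"
proof -
  have "eventually (\<lambda>k::nat. (real k + 1) powr s \<le> real k powr s') sequentially"
    using assms by real_asymp
  from eventually_compose_filterlim[OF this filterlim_nat_floor_powr[OF assms(3)]]
  show ?thesis
  proof eventually_elim
    case (elim n)
    have "real n powr (s * t) = (real n powr t) powr s" by (simp add: powr_powr mult.commute)
    also have "\<dots> \<le> (real (nat \<lfloor>real n powr t\<rfloor>) + 1) powr s"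
      using assms by (intro powr_mono2) (simp_all add: less_imp_le)
    also have "\<dots> \<le> real (nat \<lfloor>real n powr t\<rfloor>) powr s'" by (rule elim)
    finally show ?case
      unfolding tail_ratio_compose unfolding tail_ratio_def
      by (rule divide_right_mono[OF tail_sum_antimono tail_sum_nonneg])
  qed
qed

theorem convergent_tail_ratio_iff_power:
  "(\<forall>t. 0 < t \<and> t < 1 \<longrightarrow> convergent (tail_ratio t)) \<longleftrightarrow>
   (\<exists>\<gamma>\<ge>0. \<forall>t. 0 < t \<and> t < 1 \<longrightarrow> tail_ratio t \<longlonglongrightarrow> t powr (- \<gamma>))"
proof
  assume "\<exists>\<gamma>\<ge>0. \<forall>t. 0 < t \<and> t < 1 \<longrightarrow> tail_ratio t \<longlonglongrightarrow> t powr (- \<gamma>)"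
  then show "\<forall>t. 0 < t \<and> t < 1 \<longrightarrow> convergent (tail_ratio t)" by (auto intro: convergentI)
next
  assume "\<forall>t. 0 < t \<and> t < 1 \<longrightarrow> convergent (tail_ratio t)"
  then have lim: "tail_ratio t \<longlonglongrightarrow> lim (tail_ratio t)" if "0 < t" "t < 1" for t
    using that by (simp add: convergent_LIMSEQ_iff)
  define m where "m t n = nat \<lfloor>real n powr t\<rfloor>" for t n
  have lim_m: "(\<lambda>n. tail_ratio s (m t n)) \<longlonglongrightarrow> lim (tail_ratio s)" if "0 < s" "s < 1" "0 < t" for s t
    unfolding m_def using filterlim_compose[OF lim filterlim_nat_floor_powr] that by blast
  have "\<exists>\<gamma>\<ge>0. \<forall>t. 0 < t \<and> t < 1 \<longrightarrow> lim (tail_ratio t) = t powr (- \<gamma>)"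
  proof (rule power_law_of_near_multiplicative)
    show "lim (tail_ratio t) \<ge> 1" if "0 < t" "t < 1" for t
      using that by (intro tendsto_le[OF _ lim tendsto_const]
          eventually_mono[OF eventually_ge_at_top[of 1]] tail_ratio_ge_1) auto
    show "lim (tail_ratio t) \<le> lim (tail_ratio s)" if "0 < s" "s \<le> t" "t < 1" for s t
      using that by (intro tendsto_le[OF _ lim lim]
          eventually_mono[OF eventually_ge_at_top[of 1]] tail_ratio_antimono) auto
    show "lim (tail_ratio (s * t)) \<le> lim (tail_ratio s) * lim (tail_ratio t)"
      if "0 < s" "s < 1" "0 < t" "t < 1" for s t
      using that mult_strict_mono[of s 1 t 1] tail_ratio_mult_le[of s]
      by (intro tendsto_le[OF _ tendsto_mult[OF lim_m[of s t] lim[of t]] lim, unfolded m_def]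
          always_eventually allI) auto
    show "lim (tail_ratio s') * lim (tail_ratio t) \<le> lim (tail_ratio (s * t))"
      if "0 < s" "s < s'" "s' < 1" "0 < t" "t < 1" for s s' t
      using that mult_strict_mono[of s 1 t 1] tail_ratio_mult_ge[of s s' t]
      by (intro tendsto_le[OF _ lim tendsto_mult[OF lim_m[of s' t] lim[of t]], unfolded m_def]) auto
  qed
  then show "\<exists>\<gamma>\<ge>0. \<forall>t. 0 < t \<and> t < 1 \<longrightarrow> tail_ratio t \<longlonglongrightarrow> t powr (- \<gamma>)"
    using lim by metis
qed

end

section \<open>Tails of logarithmic decay\<close>

lemma upper_bound_of_square_increments:
  fixes S G :: "nat \<Rightarrow> real"
  assumes S: "S \<longlonglongrightarrow> 0" and N: "N \<ge> 2" and \<alpha>: "\<alpha> \<ge> 0" and P: "0 \<le> P" "P < 1"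
    and step: "\<And>n. n \<ge> N \<Longrightarrow> S n - S (n^2) \<le> \<alpha> * G n \<and> 0 < G n \<and> G (n^2) \<le> P * G n"
    and n: "n \<ge> N"
  shows "S n \<le> \<alpha> / (1 - P) * G n"
proof -
  define C where "C = \<alpha> / (1 - P)"
  have C: "C \<ge> 0" "\<alpha> + C * P = C" unfolding C_def using \<alpha> P by (auto simp: field_simps)
  have "\<forall>n\<ge>N. S n \<le> C * G n + S (n ^ (2 ^ J))" for J
  proof (induction J)
    case 0
    show ?case using step C(1) by (simp add: less_imp_le)
  next
    case (Suc J)
    show ?case
    proof (intro allI impI)
      fix n assume n: "n \<ge> N"
      have "N \<le> n^2" using n by (simp add: power2_eq_square) (metis le_square order_trans)
      then have "S (n^2) \<le> C * G (n^2) + S ((n^2) ^ (2 ^ J))" using Suc by blast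
      also have "(n^2) ^ (2 ^ J) = n ^ (2 ^ Suc J)" by (simp add: power_mult[symmetric] mult.commute)
      also have "C * G (n^2) \<le> C * (P * G n)" using step[OF n] C by (intro mult_left_mono) auto
      finally have "S n \<le> \<alpha> * G n + C * (P * G n) + S (n ^ (2 ^ Suc J))"
        using step[OF n] by simp
      also have "\<alpha> * G n + C * (P * G n) = (\<alpha> + C * P) * G n" by (simp add: algebra_simps)
      finally show "S n \<le> C * G n + S (n ^ (2 ^ Suc J))" unfolding C(2) .
    qed
  qed
  moreover have "(\<lambda>J. C * G n + S (n ^ (2 ^ J))) \<longlonglongrightarrow> C * G n + 0"
    using N n by (intro tendsto_intros filterlim_compose[OF S] filterlim_power_iterated_square) auto
  ultimately show ?thesis using n unfolding C_def by (intro LIMSEQ_le_const[of _ _ "S n"]) auto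
qed

lemma lower_bound_of_square_increments:
  fixes S G :: "nat \<Rightarrow> real"
  assumes S: "\<And>n. S n \<ge> 0" and \<beta>: "\<beta> \<ge> 0" and p: "0 \<le> p" "p < 1"
    and step: "\<And>n. n \<ge> N \<Longrightarrow> \<beta> * G n \<le> S n - S (n^2) \<and> p * G n \<le> G (n^2)"
    and n: "n \<ge> N"
  shows "\<beta> / (1 - p) * G n \<le> S n"
proof -
  define c where "c = \<beta> / (1 - p)"
  have c: "c \<ge> 0" "\<beta> = c * (1 - p)" unfolding c_def using \<beta> p by auto
  have "\<forall>n\<ge>N. c * (1 - p ^ J) * G n \<le> S n" for J
  proof (induction J)
    case 0 then show ?case using S by simp
  next
    case (Suc J)
    show ?case
    proof (intro allI impI)
      fix n assume n: "n \<ge> N"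
      have cJ: "c * (1 - p ^ J) \<ge> 0" using c p by (simp add: power_le_one)
      have "n \<le> n^2" by (simp add: power2_eq_square)
      have "c * (1 - p ^ Suc J) * G n = \<beta> * G n + c * (1 - p ^ J) * (p * G n)"
        unfolding c(2) by (simp add: algebra_simps)
      also have "\<dots> \<le> (S n - S (n^2)) + c * (1 - p ^ J) * G (n^2)"
        using step[OF n] cJ by (intro add_mono mult_left_mono) auto
      also have "\<dots> \<le> S n" using Suc n \<open>n \<le> n^2\<close> by simp
      finally show "c * (1 - p ^ Suc J) * G n \<le> S n" .
    qed
  qed
  moreover have "(\<lambda>J. c * (1 - p ^ J) * G n) \<longlonglongrightarrow> c * (1 - 0) * G n"
    using p by (intro tendsto_intros LIMSEQ_power_zero) auto
  ultimately show ?thesis using n unfolding c_def by (intro LIMSEQ_le_const2[of _ _ "S n"]) auto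
qed

lemma asymp_of_square_increments:
  fixes S G :: "nat \<Rightarrow> real" and q :: real
  assumes S_nonneg: "\<And>n. S n \<ge> 0" and S: "S \<longlonglongrightarrow> 0"
    and G_pos: "eventually (\<lambda>n. G n > 0) sequentially"
    and increments: "(\<lambda>n. (S n - S (n^2)) / G n) \<longlonglongrightarrow> 1 - q"
    and ratio: "(\<lambda>n. G (n^2) / G n) \<longlonglongrightarrow> q"
    and q: "0 < q" "q < 1"
  shows "(\<lambda>n. S n / G n) \<longlonglongrightarrow> 1"
proof (rule tendsto_1_of_eventually_bounds)
  define c where "c \<epsilon> = (1 - q) * (1 - \<epsilon>) / (1 - q * (1 - \<epsilon>))" for \<epsilon>
  define C where "C \<epsilon> = (1 - q) * (1 + \<epsilon>) / (1 - q * (1 + \<epsilon>))" for \<epsilon>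
  show "(c \<longlongrightarrow> 1) (at_right 0)" "(C \<longlongrightarrow> 1) (at_right 0)"
    unfolding c_def C_def using q by (auto intro!: tendsto_eq_intros)
  show "min 1 ((1 - q) / (2 * q)) > 0" using q by simp
  fix \<epsilon> :: real assume \<epsilon>: "0 < \<epsilon>" "\<epsilon> < min 1 ((1 - q) / (2 * q))"
  have q\<epsilon>: "q * \<epsilon> < (1 - q) / 2" "0 < q * \<epsilon>" "q * \<epsilon> < q"
    using \<epsilon> q by (simp_all add: field_simps)
  then have P: "0 \<le> q * (1 + \<epsilon>)" "q * (1 + \<epsilon>) < 1" and p: "0 \<le> q * (1 - \<epsilon>)" "q * (1 - \<epsilon>) < 1"
    using q by (simp_all add: algebra_simps del: zero_less_mult_iff)
  have "(1 - q) * (1 - \<epsilon>) < 1 - q" "1 - q < (1 - q) * (1 + \<epsilon>)"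
    "q * (1 - \<epsilon>) < q" "q < q * (1 + \<epsilon>)" using q \<epsilon> by auto
  from order_tendstoD(1)[OF increments this(1)] order_tendstoD(2)[OF increments this(2)]
    order_tendstoD(1)[OF ratio this(3)] order_tendstoD(2)[OF ratio this(4)] G_pos
  have "eventually (\<lambda>n. (1 - q) * (1 - \<epsilon>) * G n \<le> S n - S (n^2) \<and>
      S n - S (n^2) \<le> (1 - q) * (1 + \<epsilon>) * G n \<and> 0 < G n \<and>
      q * (1 - \<epsilon>) * G n \<le> G (n^2) \<and> G (n^2) \<le> q * (1 + \<epsilon>) * G n) sequentially"
    by eventually_elim (simp add: field_simps)
  then obtain N where N: "\<And>n. n \<ge> N \<Longrightarrow> (1 - q) * (1 - \<epsilon>) * G n \<le> S n - S (n^2) \<and>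
      S n - S (n^2) \<le> (1 - q) * (1 + \<epsilon>) * G n \<and> 0 < G n \<and>
      q * (1 - \<epsilon>) * G n \<le> G (n^2) \<and> G (n^2) \<le> q * (1 + \<epsilon>) * G n"
    by (auto simp: eventually_sequentially)
  show "eventually (\<lambda>n. c \<epsilon> \<le> S n / G n \<and> S n / G n \<le> C \<epsilon>) sequentially"
    using eventually_ge_at_top[of "max N 2"]
  proof eventually_elim
    case (elim n)
    have "S n \<le> C \<epsilon> * G n" unfolding C_def
    proof (rule upper_bound_of_square_increments[OF S _ _ P])
      show "\<And>m. m \<ge> max N 2 \<Longrightarrow> S m - S (m^2) \<le> (1 - q) * (1 + \<epsilon>) * G m \<and> 0 < G m \<and>
          G (m^2) \<le> q * (1 + \<epsilon>) * G m" using N by auto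
    qed (use elim q \<epsilon> in auto)
    moreover have "c \<epsilon> * G n \<le> S n" unfolding c_def
    proof (rule lower_bound_of_square_increments[OF S_nonneg _ p])
      show "\<And>m. m \<ge> N \<Longrightarrow> (1 - q) * (1 - \<epsilon>) * G m \<le> S m - S (m^2) \<and>
          q * (1 - \<epsilon>) * G m \<le> G (m^2)" using N by auto
    qed (use elim q \<epsilon> in auto)
    ultimately show ?case using N[of n] elim by (simp add: field_simps)
  qed
qed

definition log_tail_density :: "real \<Rightarrow> real \<Rightarrow> real" where
  "log_tail_density \<gamma> x = 1 / (x * ln x powr (1 + \<gamma>))"

definition log_tail :: "real \<Rightarrow> real \<Rightarrow> real" where
  "log_tail \<gamma> x = ln x powr (- \<gamma>) / \<gamma>"

lemma log_tail_has_real_derivative: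
  assumes "\<gamma> > 0" "x > 1"
  shows "(log_tail \<gamma> has_real_derivative - log_tail_density \<gamma> x) (at x)"
proof -
  have "ln x powr (- \<gamma> - 1) = ln x powr (- (1 + \<gamma>))"
    by (rule arg_cong[where f = "\<lambda>e. ln x powr e"]) simp
  also have "\<dots> = inverse (ln x powr (1 + \<gamma>))" by (rule powr_minus)
  finally have "ln x powr (- \<gamma> - 1) = inverse (ln x powr (1 + \<gamma>))" .
  then have e: "ln x powr (- \<gamma> - 1) / x = 1 / (x * ln x powr (1 + \<gamma>))"
    by (simp add: field_simps)
  show ?thesis unfolding log_tail_def log_tail_density_def
    by (insert assms, (rule derivative_eq_intros refl | simp add: e)+)
qed

lemma log_tail_density_pos: "x > 1 \<Longrightarrow> log_tail_density \<gamma> x > 0"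
  unfolding log_tail_density_def by simp

lemma log_tail_density_antimono:
  assumes "\<gamma> > 0" "1 < x" "x \<le> y"
  shows "log_tail_density \<gamma> y \<le> log_tail_density \<gamma> x"
proof -
  have "ln x powr (1 + \<gamma>) \<le> ln y powr (1 + \<gamma>)" using assms by (intro powr_mono2) auto
  then have "x * ln x powr (1 + \<gamma>) \<le> y * ln y powr (1 + \<gamma>)" using assms by (intro mult_mono) auto
  then show ?thesis unfolding log_tail_density_def using assms by (intro divide_left_mono) auto
qed

lemma tendsto_log_tail_density_square_block:
  assumes \<gamma>: "\<gamma> > 0"
  shows "(\<lambda>n. \<gamma> * ln (real n) powr \<gamma> * (\<Sum>k\<in>{n<..n^2}. log_tail_density \<gamma> (real k)))
    \<longlonglongrightarrow> 1 - 2 powr (- \<gamma>)"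
proof (rule tendsto_sandwich)
  note bounds = sum_bounds_of_antiderivative[where a = 1,
      OF log_tail_has_real_derivative[OF \<gamma>] log_tail_density_antimono[OF \<gamma>]]
  have n_le: "n \<le> n^2" for n :: nat by (simp add: power2_eq_square)
  define c where "c n = \<gamma> * ln (real n) powr \<gamma>" for n :: nat
  have c: "c n \<ge> 0" for n unfolding c_def using \<gamma> by simp
  show "eventually (\<lambda>n. c n * (log_tail \<gamma> (real n + 1) - log_tail \<gamma> (real (n^2) + 1))
      \<le> c n * (\<Sum>k\<in>{n<..n^2}. log_tail_density \<gamma> (real k))) sequentially"
    using eventually_ge_at_top[of 2]
    by eventually_elim (intro mult_left_mono bounds(1) n_le c; simp)
  show "eventually (\<lambda>n. c n * (\<Sum>k\<in>{n<..n^2}. log_tail_density \<gamma> (real k))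
      \<le> c n * (log_tail \<gamma> (real n) - log_tail \<gamma> (real (n^2)))) sequentially"
    using eventually_ge_at_top[of 2]
    by eventually_elim (intro mult_left_mono bounds(2) n_le c; simp)
  have "(\<lambda>n::nat. ln (real n) powr \<gamma> * (ln (real n + 1) powr -\<gamma> - ln (real n ^ 2 + 1) powr -\<gamma>))
      \<longlonglongrightarrow> 1 - 2 powr -\<gamma>"
    using \<gamma> by real_asymp
  then show "(\<lambda>n. c n * (log_tail \<gamma> (real n + 1) - log_tail \<gamma> (real (n^2) + 1))) \<longlonglongrightarrow> 1 - 2 powr (- \<gamma>)"
    unfolding c_def log_tail_def using \<gamma> by (simp add: diff_divide_distrib[symmetric])
  have "(\<lambda>n::nat. ln (real n) powr \<gamma> * (ln (real n) powr -\<gamma> - ln (real n ^ 2) powr -\<gamma>))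
      \<longlonglongrightarrow> 1 - 2 powr -\<gamma>"
    using \<gamma> by real_asymp
  then show "(\<lambda>n. c n * (log_tail \<gamma> (real n) - log_tail \<gamma> (real (n^2)))) \<longlonglongrightarrow> 1 - 2 powr (- \<gamma>)"
    unfolding c_def log_tail_def using \<gamma> by (simp add: diff_divide_distrib[symmetric])
qed

definition log_profile :: "(real \<Rightarrow> real) \<Rightarrow> real \<Rightarrow> nat \<Rightarrow> real" where
  "log_profile L \<gamma> n = L (ln (real n)) / (\<gamma> * ln (real n) powr \<gamma>)"

lemma log_profile_eventually_pos:
  assumes "slowly_varying L" "\<gamma> > 0"
  shows "eventually (\<lambda>n. log_profile L \<gamma> n > 0) sequentially"
proof -
  obtain A where A: "\<And>x. x \<ge> A \<Longrightarrow> L x > 0" using slowly_varying_eventually_pos[OF assms(1)] by blast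
  have "filterlim (\<lambda>n::nat. ln (real n)) at_top sequentially" by real_asymp
  then have "eventually (\<lambda>n::nat. ln (real n) \<ge> max A 1) sequentially"
    by (simp only: filterlim_at_top)
  then show ?thesis unfolding log_profile_def
    by eventually_elim (use A assms(2) in \<open>auto intro!: divide_pos_pos\<close>)
qed

lemma log_profile_ratio_tendsto:
  assumes sv: "slowly_varying L" and \<gamma>: "\<gamma> > 0" and t: "t > 0"
    and m: "(\<lambda>n. ln (real (m n)) / ln (real n)) \<longlonglongrightarrow> t"
  shows "(\<lambda>n. log_profile L \<gamma> (m n) / log_profile L \<gamma> n) \<longlonglongrightarrow> t powr (- \<gamma>)"
proof -
  have ln: "filterlim (\<lambda>n::nat. ln (real n)) at_top sequentially" by real_asymp
  have "eventually (\<lambda>n. ln (real (m n)) / ln (real n) * ln (real n) = ln (real (m n))) sequentially"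
    using eventually_gt_at_top[of 1] by eventually_elim simp
  with filterlim_tendsto_pos_mult_at_top[OF m t ln]
  have ln_m: "filterlim (\<lambda>n. ln (real (m n))) at_top sequentially"
    by (simp add: filterlim_cong)
  have lim: "(\<lambda>n. L (ln (real (m n))) / L (ln (real n)) * (ln (real (m n)) / ln (real n)) powr (- \<gamma>))
      \<longlonglongrightarrow> 1 * t powr (- \<gamma>)"
    by (intro tendsto_mult slowly_varying_ratio_tendsto[OF sv ln m t] tendsto_powr m) (use t in auto)
  obtain A where A: "\<And>x. x \<ge> A \<Longrightarrow> L x > 0" using slowly_varying_eventually_pos[OF sv] by blast
  have "eventually (\<lambda>n. ln (real (m n)) \<ge> max A 1) sequentially"
    "eventually (\<lambda>n. ln (real n) \<ge> max A 1) sequentially"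
    using ln ln_m by (simp_all only: filterlim_at_top)
  then have "eventually (\<lambda>n. L (ln (real (m n))) / L (ln (real n)) *
      (ln (real (m n)) / ln (real n)) powr (- \<gamma>) = log_profile L \<gamma> (m n) / log_profile L \<gamma> n) sequentially"
  proof eventually_elim
    case (elim n)
    then have "L (ln (real (m n))) > 0" "L (ln (real n)) > 0" "ln (real (m n)) > 0" "ln (real n) > 0"
      using A by auto
    then show ?case unfolding log_profile_def using \<gamma>
      by (simp add: powr_minus_divide powr_divide field_simps)
  qed
  with lim show ?thesis by (simp add: Lim_transform_eventually)
qed

lemma square_block_rel_close:
  fixes a :: "nat \<Rightarrow> real"
  assumes sv: "slowly_varying L"
    and a: "(\<lambda>k. a k / (L (ln (real k)) * log_tail_density \<gamma> (real k))) \<longlonglongrightarrow> 1"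
    and \<epsilon>: "\<epsilon> > 0"
  shows "eventually (\<lambda>n. \<forall>k\<in>{n<..n^2}. L (ln (real n)) * log_tail_density \<gamma> (real k) > 0 \<and>
      \<bar>a k - L (ln (real n)) * log_tail_density \<gamma> (real k)\<bar>
        \<le> \<epsilon> * (L (ln (real n)) * log_tail_density \<gamma> (real k))) sequentially"
proof -
  define \<delta> where "\<delta> = min (\<epsilon> / 3) 1"
  have \<delta>: "\<delta> > 0" "3 * \<delta> \<le> \<epsilon>" "\<delta> \<le> 1" unfolding \<delta>_def using \<epsilon> by auto
  define b where "b k = L (ln (real k)) * log_tail_density \<gamma> (real k)" for k
  note L_block = slowly_varying_ln_square_block[OF sv \<delta>(1)]
  have "eventually (\<lambda>k. b k > 0) sequentially"
    using L_block eventually_ge_at_top[of 2]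
    by eventually_elim (auto simp: b_def intro!: mult_pos_pos log_tail_density_pos)
  from eventually_abs_diff_less_of_ratio_tendsto_1[OF a[folded b_def] this \<delta>(1)]
  have "eventually (\<lambda>k. \<bar>a k - b k\<bar> \<le> \<delta> * b k) sequentially" by (auto elim: eventually_mono)
  then obtain K where K: "\<And>k. k \<ge> K \<Longrightarrow> \<bar>a k - b k\<bar> \<le> \<delta> * b k"
    by (auto simp: eventually_sequentially)
  from L_block eventually_ge_at_top[of "max K 2"] show ?thesis
  proof eventually_elim
    case (elim n)
    show ?case
    proof
      fix k assume k: "k \<in> {n<..n^2}"
      have f: "log_tail_density \<gamma> (real k) > 0" using k elim by (intro log_tail_density_pos) auto
      have "\<bar>b k - L (ln (real n)) * log_tail_density \<gamma> (real k)\<bar>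
          = \<bar>L (ln (real k)) - L (ln (real n))\<bar> * log_tail_density \<gamma> (real k)"
        unfolding b_def using f by (simp add: left_diff_distrib[symmetric] abs_mult)
      also have "\<dots> \<le> \<delta> * (L (ln (real n)) * log_tail_density \<gamma> (real k))"
        using elim k f by (simp add: mult_right_mono)
      finally have "\<bar>a k - L (ln (real n)) * log_tail_density \<gamma> (real k)\<bar>
          \<le> 3 * \<delta> * (L (ln (real n)) * log_tail_density \<gamma> (real k))"
        using K[of k] k elim \<delta> f by (intro abs_diff_le_rel_trans) auto
      also have "\<dots> \<le> \<epsilon> * (L (ln (real n)) * log_tail_density \<gamma> (real k))"
        using \<delta> elim f by (intro mult_right_mono) auto
      finally show "L (ln (real n)) * log_tail_density \<gamma> (real k) > 0 \<and>
          \<bar>a k - L (ln (real n)) * log_tail_density \<gamma> (real k)\<bar>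
            \<le> \<epsilon> * (L (ln (real n)) * log_tail_density \<gamma> (real k))"
        using elim f by simp
    qed
  qed
qed

context tail_seq
begin

lemma tail_sum_asymp_log_profile:
  assumes \<gamma>: "\<gamma> > 0" and sv: "slowly_varying L"
    and a: "(\<lambda>k. a k / (L (ln (real k)) * log_tail_density \<gamma> (real k))) \<longlonglongrightarrow> 1"
  shows "(\<lambda>n. tail_sum a (real n) / log_profile L \<gamma> n) \<longlonglongrightarrow> 1"
proof (rule asymp_of_square_increments[OF tail_sum_nonneg tail_sum_tendsto_0
      log_profile_eventually_pos[OF sv \<gamma>]])
  have "eventually (\<lambda>n. ln (real (n^2)) / ln (real n) = 2) sequentially"
    using eventually_ge_at_top[of 2] by eventually_elim (simp add: ln_realpow)
  then show "(\<lambda>n. log_profile L \<gamma> (n^2) / log_profile L \<gamma> n) \<longlonglongrightarrow> 2 powr (- \<gamma>)"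
    by (intro log_profile_ratio_tendsto[OF sv \<gamma>]) (auto intro: tendsto_eventually)
  define f where "f k = log_tail_density \<gamma> (real k)" for k
  have "(\<lambda>n. (\<Sum>k\<in>{n<..n^2}. a k) / (\<Sum>k\<in>{n<..n^2}. L (ln (real n)) * f k)) \<longlonglongrightarrow> 1"
  proof (rule sum_ratio_tendsto_1_of_rel_close)
    show "eventually (\<lambda>n. {n<..n^2} \<noteq> {}) sequentially"
      using eventually_ge_at_top[of 2]
      by eventually_elim (auto simp: power2_eq_square intro!: exI[of _ "n^2"])
  qed (use square_block_rel_close[OF sv a] in \<open>auto simp: f_def\<close>)
  from tendsto_mult[OF this tendsto_log_tail_density_square_block[OF \<gamma>]]
  have lim: "(\<lambda>n. (\<Sum>k\<in>{n<..n^2}. a k) / (\<Sum>k\<in>{n<..n^2}. L (ln (real n)) * f k) *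
      (\<gamma> * ln (real n) powr \<gamma> * (\<Sum>k\<in>{n<..n^2}. f k))) \<longlonglongrightarrow> 1 - 2 powr (- \<gamma>)"
    unfolding f_def by simp
  show "(\<lambda>n. (tail_sum a (real n) - tail_sum a (real (n^2))) / log_profile L \<gamma> n) \<longlonglongrightarrow> 1 - 2 powr (- \<gamma>)"
  proof (rule Lim_transform_eventually[OF lim])
    show "eventually (\<lambda>n. (\<Sum>k\<in>{n<..n^2}. a k) / (\<Sum>k\<in>{n<..n^2}. L (ln (real n)) * f k) *
        (\<gamma> * ln (real n) powr \<gamma> * (\<Sum>k\<in>{n<..n^2}. f k)) =
        (tail_sum a (real n) - tail_sum a (real (n^2))) / log_profile L \<gamma> n) sequentially"
      using log_profile_eventually_pos[OF sv \<gamma>] eventually_ge_at_top[of 2]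
    proof eventually_elim
      case (elim n)
      have "n < n^2" using elim by (simp add: power2_eq_square)
      then have "(\<Sum>k\<in>{n<..n^2}. f k) > 0"
        unfolding f_def by (intro sum_pos log_tail_density_pos) (use elim in auto)
      moreover have "tail_sum a (real n) - tail_sum a (real (n^2)) = (\<Sum>k\<in>{n<..n^2}. a k)"
        using tail_sum_split[of n "n^2"] by (simp add: power2_eq_square)
      moreover have "(\<Sum>k\<in>{n<..n^2}. L (ln (real n)) * f k) = L (ln (real n)) * (\<Sum>k\<in>{n<..n^2}. f k)"
        by (simp add: sum_distrib_left)
      ultimately show ?case using elim \<gamma> unfolding log_profile_def by (simp add: field_simps)
    qed
  qed
  show "0 < 2 powr (- \<gamma>)" "2 powr (- \<gamma>) < 1" using \<gamma> by (simp_all add: powr_less_one)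
qed

end

lemma (in tail_seq) tail_ratio_tendsto_of_log_profile:
  assumes \<gamma>: "\<gamma> > 0" and sv: "slowly_varying L" and t: "0 < t" "t < 1"
    and asymp: "(\<lambda>n. tail_sum a (real n) / log_profile L \<gamma> n) \<longlonglongrightarrow> 1"
  shows "tail_ratio t \<longlonglongrightarrow> t powr (- \<gamma>)"
proof -
  define m where "m n = nat \<lfloor>real n powr t\<rfloor>" for n
  define G where "G = log_profile L \<gamma>"
  have m: "filterlim m sequentially sequentially" unfolding m_def by (rule filterlim_nat_floor_powr[OF t(1)])
  have lim: "(\<lambda>n. tail_sum a (real (m n)) / G (m n) * (G (m n) / G n) / (tail_sum a (real n) / G n))
      \<longlonglongrightarrow> 1 * t powr (- \<gamma>) / 1"
    unfolding G_def m_def using t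
    by (intro tendsto_intros filterlim_compose[OF asymp filterlim_nat_floor_powr] asymp
        log_profile_ratio_tendsto[OF sv \<gamma>] ln_nat_floor_powr_ratio) auto
  have floor: "tail_sum a (real (m n)) = tail_sum a (real n powr t)" for n
    unfolding m_def by (rule tail_sum_nat_floor[symmetric]) simp
  have "eventually (\<lambda>n. G n > 0) sequentially" "eventually (\<lambda>n. G (m n) > 0) sequentially"
    using log_profile_eventually_pos[OF sv \<gamma>] eventually_compose_filterlim[OF _ m]
    unfolding G_def by blast+
  then have "eventually (\<lambda>n. tail_sum a (real (m n)) / G (m n) * (G (m n) / G n) / (tail_sum a (real n) / G n)
      = tail_ratio t n) sequentially"
    by eventually_elim (use tail_sum_pos in \<open>simp add: tail_ratio_def floor\<close>)
  with lim show ?thesis by (simp add: Lim_transform_eventually)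
qed

section \<open>Recovering the logarithmic form\<close>

locale regular_tail = tail_seq +
  fixes \<gamma> x0 :: real and Lw :: "real \<Rightarrow> real"
  assumes \<gamma>_pos: "\<gamma> > 0" and Lw_sv: "slowly_varying Lw" and Lw_antimono: "antimono_on {x0..} Lw"
    and weights: "(\<lambda>k. a k / (Lw (real k) / real k)) \<longlonglongrightarrow> 1"
    and tail_ratio_power: "\<And>t. 0 < t \<Longrightarrow> t < 1 \<Longrightarrow> tail_ratio t \<longlonglongrightarrow> t powr (- \<gamma>)"
begin

definition weight_tail_ratio :: "nat \<Rightarrow> real" where
  "weight_tail_ratio n = Lw (real n) * ln (real n) / tail_sum a (real n)"

lemma Lw_antimonoD: "x0 \<le> x \<Longrightarrow> x \<le> y \<Longrightarrow> Lw y \<le> Lw x"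
  using Lw_antimono unfolding monotone_on_def by auto

lemma eventually_weights_between:
  assumes \<eta>: "\<eta> > 0"
  shows "eventually (\<lambda>k. (1 - \<eta>) * (Lw (real k) / real k) \<le> a k \<and> a k \<le> (1 + \<eta>) * (Lw (real k) / real k)
     \<and> Lw (real k) > 0 \<and> x0 \<le> real k \<and> 2 \<le> k) sequentially"
proof -
  obtain A where A: "\<And>x. x \<ge> A \<Longrightarrow> Lw x > 0" using slowly_varying_eventually_pos[OF Lw_sv] by blast
  have "eventually (\<lambda>k::nat. real k \<ge> max (max A x0) 2) sequentially"
    using filterlim_real_sequentially by (simp only: filterlim_at_top)
  moreover from this have "eventually (\<lambda>k. Lw (real k) / real k > 0) sequentially"
    by eventually_elim (simp add: A)
  from eventually_abs_diff_less_of_ratio_tendsto_1[OF weights this \<eta>] calculation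
  show ?thesis
  proof eventually_elim
    case (elim k)
    then show ?case using A[of "real k"] unfolding abs_less_iff left_diff_distrib distrib_right mult_1
      by auto
  qed
qed

lemma tail_block_bounds:
  assumes K: "\<And>k. k \<ge> K \<Longrightarrow> (1 - \<eta>) * (Lw (real k) / real k) \<le> a k \<and>
      a k \<le> (1 + \<eta>) * (Lw (real k) / real k) \<and> Lw (real k) > 0 \<and> x0 \<le> real k \<and> 2 \<le> k"
    and \<eta>: "0 < \<eta>" "\<eta> < 1" and mn: "K \<le> m" "m \<le> n"
  shows "(1 - \<eta>) * Lw (real n) * (ln (real n + 1) - ln (real m + 1)) \<le> tail_sum a (real m) - tail_sum a (real n)"
    and "tail_sum a (real m) - tail_sum a (real n) \<le> (1 + \<eta>) * Lw (real m) * (ln (real n) - ln (real m))"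
proof -
  have block: "tail_sum a (real m) - tail_sum a (real n) = (\<Sum>k\<in>{m<..n}. a k)"
    using tail_sum_split[OF mn(2)] by simp
  have m: "1 \<le> m" "x0 \<le> real m" "Lw (real n) > 0" using K[of m] K[of n] mn by auto
  have "(1 - \<eta>) * Lw (real n) * (ln (real n + 1) - ln (real m + 1))
      \<le> (1 - \<eta>) * Lw (real n) * (\<Sum>k\<in>{m<..n}. 1 / real k)"
    using harmonic_block_bounds(1)[OF m(1) mn(2)] \<eta> m by (intro mult_left_mono) auto
  also have "\<dots> \<le> (\<Sum>k\<in>{m<..n}. a k)" unfolding sum_distrib_left
  proof (rule sum_mono)
    fix k assume k: "k \<in> {m<..n}"
    then have "Lw (real n) \<le> Lw (real k)" using K[of k] mn by (intro Lw_antimonoD) auto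
    then have "(1 - \<eta>) * Lw (real n) * (1 / real k) \<le> (1 - \<eta>) * (Lw (real k) / real k)"
      using \<eta> k by (simp add: divide_right_mono)
    also have "\<dots> \<le> a k" using K[of k] k mn by simp
    finally show "(1 - \<eta>) * Lw (real n) * (1 / real k) \<le> a k" .
  qed
  finally show "(1 - \<eta>) * Lw (real n) * (ln (real n + 1) - ln (real m + 1)) \<le> tail_sum a (real m) - tail_sum a (real n)"
    unfolding block .
  have "(\<Sum>k\<in>{m<..n}. a k) \<le> (\<Sum>k\<in>{m<..n}. (1 + \<eta>) * Lw (real m) * (1 / real k))"
  proof (rule sum_mono)
    fix k assume k: "k \<in> {m<..n}"
    then have "Lw (real k) \<le> Lw (real m)" using m by (intro Lw_antimonoD) auto
    then have "(1 + \<eta>) * (Lw (real k) / real k) \<le> (1 + \<eta>) * Lw (real m) * (1 / real k)"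
      using \<eta> k by (simp add: divide_right_mono)
    then show "a k \<le> (1 + \<eta>) * Lw (real m) * (1 / real k)" using K[of k] k mn by auto
  qed
  also have "\<dots> \<le> (1 + \<eta>) * Lw (real m) * (ln (real n) - ln (real m))"
    unfolding sum_distrib_left[symmetric] using harmonic_block_bounds(2)[OF m(1) mn(2)] \<eta> K[of m] mn
    by (intro mult_left_mono) auto
  finally show "tail_sum a (real m) - tail_sum a (real n) \<le> (1 + \<eta>) * Lw (real m) * (ln (real n) - ln (real m))"
    unfolding block .
qed

lemma weight_tail_ratio_eventually_less:
  assumes t: "0 < t" "t < 1" and \<eta>: "0 < \<eta>" "\<eta> < 1"
    and c: "(t powr (- \<gamma>) - 1) / ((1 - t) * (1 - \<eta>)) < c"
  shows "eventually (\<lambda>n. weight_tail_ratio n < c) sequentially"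
proof -
  define m where "m n = nat \<lfloor>real n powr t\<rfloor>" for n
  define D where "D n = ln (real n + 1) - ln (real (m n) + 1)" for n
  obtain K where K: "\<And>k. k \<ge> K \<Longrightarrow> (1 - \<eta>) * (Lw (real k) / real k) \<le> a k \<and>
      a k \<le> (1 + \<eta>) * (Lw (real k) / real k) \<and> Lw (real k) > 0 \<and> x0 \<le> real k \<and> 2 \<le> k"
    using eventually_weights_between[OF \<eta>(1)] by (auto simp: eventually_sequentially)
  have ln_D: "(\<lambda>n. ln (real n) / D n) \<longlonglongrightarrow> 1 / (1 - t)"
    unfolding D_def m_def by (rule ln_over_ln_gap_floor_powr[OF t])
  have "(\<lambda>n. (tail_ratio t n - 1) * (ln (real n) / D n) / (1 - \<eta>))
      \<longlonglongrightarrow> (t powr (- \<gamma>) - 1) * (1 / (1 - t)) / (1 - \<eta>)"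
    using tendsto_divide[OF tendsto_mult[OF tendsto_diff[OF tail_ratio_power[OF t] tendsto_const] ln_D]
        tendsto_const, of "1 - \<eta>"] \<eta> by simp
  from order_tendstoD(2)[OF this] c
  have "eventually (\<lambda>n. (tail_ratio t n - 1) * (ln (real n) / D n) / (1 - \<eta>) < c) sequentially"
    by simp
  moreover have "eventually (\<lambda>n. m n \<ge> K) sequentially"
    using filterlim_nat_floor_powr[OF t(1)] unfolding m_def by (simp add: filterlim_at_top)
  ultimately show ?thesis using eventually_ge_at_top[of 2]
  proof eventually_elim
    case (elim n)
    have "real (m n) \<le> real n powr t" unfolding m_def by simp
    also have "\<dots> < real n powr 1" using t elim by (intro powr_less_mono) auto
    finally have "m n < n" using elim by simp
    then have block: "(1 - \<eta>) * Lw (real n) * D n \<le> tail_sum a (real (m n)) - tail_sum a (real n)"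
      unfolding D_def using tail_block_bounds(1)[OF K \<eta>] elim by simp
    have D: "D n > 0" and ln_pos: "ln (real n) > 0" using \<open>m n < n\<close> elim unfolding D_def by auto
    have floor: "tail_sum a (real n powr t) = tail_sum a (real (m n))"
      unfolding m_def by (rule tail_sum_nat_floor) simp
    have "Lw (real n) \<le> (tail_sum a (real (m n)) - tail_sum a (real n)) / ((1 - \<eta>) * D n)"
      using block D \<eta> by (simp add: pos_le_divide_eq mult.commute mult.left_commute)
    then have "weight_tail_ratio n \<le>
        (tail_sum a (real (m n)) - tail_sum a (real n)) / ((1 - \<eta>) * D n) * ln (real n) / tail_sum a (real n)"
      unfolding weight_tail_ratio_def using ln_pos tail_sum_pos[of "real n"]
      by (intro divide_right_mono mult_right_mono) auto
    also have "\<dots> = (tail_ratio t n - 1) * (ln (real n) / D n) / (1 - \<eta>)"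
      unfolding tail_ratio_def floor using tail_sum_pos[of "real n"] D \<eta> by (simp add: field_simps)
    finally have "weight_tail_ratio n \<le> (tail_ratio t n - 1) * (ln (real n) / D n) / (1 - \<eta>)" .
    with elim show ?case by linarith
  qed
qed

lemma tail_sum_ceiling_powr_ratio:
  assumes t: "0 < t" "t < 1"
  shows "(\<lambda>m. tail_sum a (real (nat \<lceil>real m powr (1/t)\<rceil>)) / tail_sum a (real m)) \<longlonglongrightarrow> t powr \<gamma>"
proof -
  define M where "M m = nat \<lceil>real m powr (1/t)\<rceil>" for m
  have "real m \<le> real (M m)" if "m \<ge> 1" for m
  proof -
    have "real m powr 1 \<le> real m powr (1/t)" using that t by (intro powr_mono) auto
    then show ?thesis unfolding M_def using that
      by (intro order_trans[OF _ real_nat_ceiling_bounds(1)[OF powr_ge_zero]]) simp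
  qed
  then have "m \<le> M m" if "m \<ge> 1" for m using that by simp
  then have M: "filterlim M sequentially sequentially"
    by (intro filterlim_at_top_mono[OF filterlim_ident] eventually_mono[OF eventually_ge_at_top[of 1]])
  have "eventually (\<lambda>m. tail_ratio t (M m) = tail_sum a (real m) / tail_sum a (real (M m))) sequentially"
    using nat_floor_powr_nat_ceiling_inverse[OF t] unfolding M_def[symmetric]
    by eventually_elim (metis tail_ratio_def tail_sum_nat_floor powr_ge_zero)
  with filterlim_compose[OF tail_ratio_power[OF t] M]
  have "(\<lambda>m. tail_sum a (real m) / tail_sum a (real (M m))) \<longlonglongrightarrow> t powr (- \<gamma>)"
    by (rule Lim_transform_eventually)
  then have "(\<lambda>m. 1 / (tail_sum a (real m) / tail_sum a (real (M m)))) \<longlonglongrightarrow> 1 / t powr (- \<gamma>)"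
    using t by (intro tendsto_divide tendsto_const) auto
  then show ?thesis unfolding M_def using t by (simp add: powr_minus_divide)
qed

lemma weight_tail_ratio_eventually_greater:
  assumes t: "0 < t" "t < 1" and \<eta>: "0 < \<eta>" "\<eta> < 1"
    and c: "c < (1 - t powr \<gamma>) / ((1 / t - 1) * (1 + \<eta>))"
  shows "eventually (\<lambda>m. c < weight_tail_ratio m) sequentially"
proof -
  define M where "M m = nat \<lceil>real m powr (1/t)\<rceil>" for m
  define D where "D m = ln (real (M m)) - ln (real m)" for m
  obtain K where K: "\<And>k. k \<ge> K \<Longrightarrow> (1 - \<eta>) * (Lw (real k) / real k) \<le> a k \<and>
      a k \<le> (1 + \<eta>) * (Lw (real k) / real k) \<and> Lw (real k) > 0 \<and> x0 \<le> real k \<and> 2 \<le> k"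
    using eventually_weights_between[OF \<eta>(1)] by (auto simp: eventually_sequentially)
  have M_bounds: "real m powr (1/t) \<le> real (M m)" "real (M m) \<le> real m powr (1/t) + 1" for m
    unfolding M_def by (intro real_nat_ceiling_bounds powr_ge_zero)+
  have ratio: "(\<lambda>m. tail_sum a (real (M m)) / tail_sum a (real m)) \<longlonglongrightarrow> t powr \<gamma>"
    unfolding M_def by (rule tail_sum_ceiling_powr_ratio[OF t])
  have ln_D: "(\<lambda>m. ln (real m) / D m) \<longlonglongrightarrow> 1 / (1 / t - 1)"
    unfolding D_def M_def by (rule ln_over_ln_gap_ceiling_powr[OF t])
  have "(\<lambda>m. (1 - tail_sum a (real (M m)) / tail_sum a (real m)) * (ln (real m) / D m) / (1 + \<eta>))
      \<longlonglongrightarrow> (1 - t powr \<gamma>) * (1 / (1 / t - 1)) / (1 + \<eta>)"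
    using tendsto_divide[OF tendsto_mult[OF tendsto_diff[OF tendsto_const ratio] ln_D] tendsto_const,
        of "1 + \<eta>"] \<eta> by simp
  from order_tendstoD(1)[OF this] c
  have "eventually (\<lambda>m. c < (1 - tail_sum a (real (M m)) / tail_sum a (real m)) * (ln (real m) / D m) / (1 + \<eta>))
      sequentially" by simp
  moreover have "eventually (\<lambda>m::nat. real m powr (1/t) > real m + 1) sequentially" using t by real_asymp
  ultimately show ?thesis using eventually_ge_at_top[of K]
  proof eventually_elim
    case (elim m)
    then have "m < M m" using M_bounds[of m] by linarith
    then have block: "tail_sum a (real m) - tail_sum a (real (M m)) \<le> (1 + \<eta>) * Lw (real m) * D m"
      unfolding D_def using tail_block_bounds(2)[OF K \<eta>] elim by simp
    have D: "D m > 0" and ln_pos: "ln (real m) > 0" using \<open>m < M m\<close> K[OF elim(3)] unfolding D_def by auto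
    have "(1 - tail_sum a (real (M m)) / tail_sum a (real m)) * (ln (real m) / D m) / (1 + \<eta>)
        = (tail_sum a (real m) - tail_sum a (real (M m))) * ln (real m) / (tail_sum a (real m) * D m * (1 + \<eta>))"
      using tail_sum_pos[of "real m"] D \<eta> by (simp add: field_simps)
    also have "\<dots> \<le> (1 + \<eta>) * Lw (real m) * D m * ln (real m) / (tail_sum a (real m) * D m * (1 + \<eta>))"
      using block ln_pos tail_sum_pos[of "real m"] D \<eta> by (intro divide_right_mono mult_right_mono) auto
    also have "\<dots> = Lw (real m) * ln (real m) * (D m * (1 + \<eta>)) / (tail_sum a (real m) * (D m * (1 + \<eta>)))"
      by (simp add: algebra_simps)
    also have "\<dots> = weight_tail_ratio m"
      unfolding weight_tail_ratio_def using D \<eta> by (intro mult_divide_mult_cancel_right) simp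
    finally show ?case using elim by linarith
  qed
qed

lemma weight_tail_ratio_tendsto: "weight_tail_ratio \<longlonglongrightarrow> \<gamma>"
proof -
  define U where "U e = ((1 - e) powr (- \<gamma>) - 1) / ((1 - (1 - e)) * (1 - e))" for e :: real
  define V where "V e = (1 - (1 - e) powr \<gamma>) / ((1 / (1 - e) - 1) * (1 + e))" for e :: real
  have "(\<lambda>n. weight_tail_ratio n / \<gamma>) \<longlonglongrightarrow> 1"
  proof (rule tendsto_1_of_eventually_bounds[of "\<lambda>e. V e / \<gamma> - e" "\<lambda>e. U e / \<gamma> + e" "1/2"])
    show "((\<lambda>e. V e / \<gamma> - e) \<longlongrightarrow> 1) (at_right 0)" "((\<lambda>e. U e / \<gamma> + e) \<longlongrightarrow> 1) (at_right 0)"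
      unfolding U_def V_def using \<gamma>_pos by real_asymp+
    fix e :: real assume e: "0 < e" "e < 1/2"
    have "\<gamma> * (U e / \<gamma> + e) = U e + \<gamma> * e" "\<gamma> * (V e / \<gamma> - e) = V e - \<gamma> * e"
      using \<gamma>_pos by (simp_all add: distrib_left right_diff_distrib)
    then have "eventually (\<lambda>n. weight_tail_ratio n < \<gamma> * (U e / \<gamma> + e)) sequentially"
      "eventually (\<lambda>n. \<gamma> * (V e / \<gamma> - e) < weight_tail_ratio n) sequentially"
      using e \<gamma>_pos unfolding U_def V_def
      by (auto intro!: weight_tail_ratio_eventually_less[of "1 - e" e]
          weight_tail_ratio_eventually_greater[of "1 - e" e])
    then show "eventually (\<lambda>n. V e / \<gamma> - e \<le> weight_tail_ratio n / \<gamma> \<and>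
        weight_tail_ratio n / \<gamma> \<le> U e / \<gamma> + e) sequentially"
      by eventually_elim (use \<gamma>_pos in \<open>simp add: pos_le_divide_eq pos_divide_le_eq mult.commute\<close>)
  qed (simp add: \<gamma>_pos)
  then have "(\<lambda>n. \<gamma> * (weight_tail_ratio n / \<gamma>)) \<longlonglongrightarrow> \<gamma> * 1" by (intro tendsto_intros)
  then show ?thesis using \<gamma>_pos by simp
qed

lemma tail_sum_Suc_ratio: "(\<lambda>n. tail_sum a (real (Suc n)) / tail_sum a (real n)) \<longlonglongrightarrow> 1"
proof -
  have "(\<lambda>n. a (Suc n) / tail_sum a (real n)) \<longlonglongrightarrow> 0"
  proof (rule tendsto_sandwich[of "\<lambda>_. 0" _ _ "\<lambda>n. 2 * weight_tail_ratio n * (1 / (real n * ln (real n)))"])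
    show "eventually (\<lambda>n. 0 \<le> a (Suc n) / tail_sum a (real n)) sequentially"
      using nonneg tail_sum_nonneg by (auto intro!: always_eventually divide_nonneg_nonneg)
    have "eventually (\<lambda>n. \<forall>k\<ge>n. a k \<le> 2 * (Lw (real k) / real k) \<and> Lw (real k) > 0 \<and> x0 \<le> real k \<and> 2 \<le> k)
        sequentially"
      using eventually_all_ge_at_top[OF eventually_weights_between[of 1]] by (auto elim!: eventually_mono)
    then show "eventually (\<lambda>n. a (Suc n) / tail_sum a (real n)
        \<le> 2 * weight_tail_ratio n * (1 / (real n * ln (real n)))) sequentially"
    proof eventually_elim
      case (elim n)
      then have "a (Suc n) \<le> 2 * (Lw (real (Suc n)) / real (Suc n))" using le_SucI by blast
      also have "\<dots> \<le> 2 * (Lw (real n) / real n)"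
        using elim Lw_antimonoD[of "real n" "real (Suc n)"] by (auto intro!: frac_le)
      finally have "a (Suc n) / tail_sum a (real n) \<le> 2 * (Lw (real n) / real n) / tail_sum a (real n)"
        by (rule divide_right_mono[OF _ tail_sum_nonneg])
      moreover have "ln (real n) > 0" using elim by auto
      ultimately show ?case unfolding weight_tail_ratio_def using tail_sum_pos[of "real n"]
        by (simp add: field_simps)
    qed
    have "(\<lambda>n. 1 / (real n * ln (real n))) \<longlonglongrightarrow> 0" by real_asymp
    then show "(\<lambda>n. 2 * weight_tail_ratio n * (1 / (real n * ln (real n)))) \<longlonglongrightarrow> 0"
      using tendsto_mult[OF tendsto_mult[OF tendsto_const weight_tail_ratio_tendsto]] by fastforce
  qed simp
  then have "(\<lambda>n. 1 - a (Suc n) / tail_sum a (real n)) \<longlonglongrightarrow> 1 - 0" by (intro tendsto_intros)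
  moreover have "1 - a (Suc n) / tail_sum a (real n) = tail_sum a (real (Suc n)) / tail_sum a (real n)" for n
  proof -
    have "{n<..Suc n} = {Suc n}" by auto
    then show ?thesis using tail_sum_pos[of "real n"] tail_sum_split[of n "Suc n"] by (simp add: field_simps)
  qed
  ultimately show ?thesis by simp
qed

lemma tail_sum_exp_ratio:
  assumes c: "0 < c" "c < 1"
  shows "((\<lambda>u. tail_sum a (exp (c * u)) / tail_sum a (exp u)) \<longlongrightarrow> c powr (- \<gamma>)) at_top"
proof (rule tendsto_sandwich[of "\<lambda>u. tail_ratio c (Suc (floor_exp u)) *
      (tail_sum a (real (Suc (floor_exp u))) / tail_sum a (real (floor_exp u)))" _ _
      "\<lambda>u. tail_ratio c (floor_exp u)"])
  have exp: "exp (c * u) = exp u powr c" for u by (simp add: powr_def mult.commute)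
  have floor: "tail_sum a (exp u) = tail_sum a (real (floor_exp u))" for u
    unfolding floor_exp_def by (rule tail_sum_nat_floor) simp
  show "eventually (\<lambda>u. tail_ratio c (Suc (floor_exp u)) *
      (tail_sum a (real (Suc (floor_exp u))) / tail_sum a (real (floor_exp u)))
      \<le> tail_sum a (exp (c * u)) / tail_sum a (exp u)) at_top"
  proof (intro always_eventually allI)
    fix u :: real
    have "exp (c * u) \<le> real (Suc (floor_exp u)) powr c"
      unfolding exp using floor_exp_bounds(2)[of u] c by (intro powr_mono2) auto
    then show "tail_ratio c (Suc (floor_exp u)) *
      (tail_sum a (real (Suc (floor_exp u))) / tail_sum a (real (floor_exp u)))
      \<le> tail_sum a (exp (c * u)) / tail_sum a (exp u)"
      unfolding tail_ratio_def floor[of u] using tail_sum_pos[of "real (Suc (floor_exp u))"]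
      by (simp add: divide_right_mono[OF tail_sum_antimono tail_sum_nonneg])
  qed
  show "eventually (\<lambda>u. tail_sum a (exp (c * u)) / tail_sum a (exp u) \<le> tail_ratio c (floor_exp u)) at_top"
  proof (intro always_eventually allI)
    fix u :: real
    have "real (floor_exp u) powr c \<le> exp (c * u)"
      unfolding exp using floor_exp_bounds(1)[of u] c by (intro powr_mono2) auto
    then show "tail_sum a (exp (c * u)) / tail_sum a (exp u) \<le> tail_ratio c (floor_exp u)"
      unfolding tail_ratio_def floor[of u] by (rule divide_right_mono[OF tail_sum_antimono tail_sum_nonneg])
  qed
  show "((\<lambda>u. tail_ratio c (floor_exp u)) \<longlongrightarrow> c powr (- \<gamma>)) at_top"
    by (rule filterlim_compose[OF tail_ratio_power[OF c] filterlim_floor_exp])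
  have "((\<lambda>u. tail_ratio c (Suc (floor_exp u)) *
      (tail_sum a (real (Suc (floor_exp u))) / tail_sum a (real (floor_exp u)))) \<longlongrightarrow> c powr (- \<gamma>) * 1) at_top"
    by (intro tendsto_mult filterlim_compose[OF tail_ratio_power[OF c]]
        filterlim_compose[OF tail_sum_Suc_ratio filterlim_floor_exp]
        filterlim_compose[OF filterlim_Suc filterlim_floor_exp])
  then show "((\<lambda>u. tail_ratio c (Suc (floor_exp u)) *
      (tail_sum a (real (Suc (floor_exp u))) / tail_sum a (real (floor_exp u)))) \<longlongrightarrow> c powr (- \<gamma>)) at_top"
    by simp
qed

lemma Lw_exp_floor_ratio: "((\<lambda>u. Lw (exp u) / Lw (real (floor_exp u))) \<longlongrightarrow> 1) at_top"
proof (rule tendsto_sandwich[of "\<lambda>u. Lw (2 * real (floor_exp u)) / Lw (real (floor_exp u))" _ _ "\<lambda>_. 1"])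
  obtain A where A: "\<And>x. x \<ge> A \<Longrightarrow> Lw x > 0" using slowly_varying_eventually_pos[OF Lw_sv] by blast
  have "eventually (\<lambda>u. real (floor_exp u) \<ge> max (max x0 1) A) at_top"
    using filterlim_real_floor_exp by (simp only: filterlim_at_top)
  then have "eventually (\<lambda>u. Lw (2 * real (floor_exp u)) \<le> Lw (exp u) \<and> Lw (exp u) \<le> Lw (real (floor_exp u))
      \<and> Lw (real (floor_exp u)) > 0) at_top"
  proof eventually_elim
    case (elim u)
    then have "x0 \<le> exp u" "exp u \<le> 2 * real (floor_exp u)" using floor_exp_bounds[of u] by linarith+
    with elim show ?case using A floor_exp_bounds(1)[of u] by (auto intro!: Lw_antimonoD)
  qed
  then show "eventually (\<lambda>u. Lw (2 * real (floor_exp u)) / Lw (real (floor_exp u))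
      \<le> Lw (exp u) / Lw (real (floor_exp u))) at_top"
    "eventually (\<lambda>u. Lw (exp u) / Lw (real (floor_exp u)) \<le> 1) at_top"
    by (auto elim!: eventually_mono intro: divide_right_mono)
  show "((\<lambda>u. Lw (2 * real (floor_exp u)) / Lw (real (floor_exp u))) \<longlongrightarrow> 1) at_top"
    by (rule filterlim_compose[OF slowly_varying_tendsto[OF Lw_sv] filterlim_real_floor_exp]) simp
qed simp

definition L_log :: "real \<Rightarrow> real" where
  "L_log u = Lw (exp u) * u powr (1 + \<gamma>)"

lemma L_log_factorization:
  "eventually (\<lambda>u. L_log u = Lw (exp u) / Lw (real (floor_exp u)) * weight_tail_ratio (floor_exp u) *
      tail_sum a (exp u) * u powr \<gamma> * (u / ln (real (floor_exp u)))) at_top"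
proof -
  obtain A where A: "\<And>x. x \<ge> A \<Longrightarrow> Lw x > 0" using slowly_varying_eventually_pos[OF Lw_sv] by blast
  have "eventually (\<lambda>u. real (floor_exp u) \<ge> max A 2) at_top"
    using filterlim_real_floor_exp by (simp only: filterlim_at_top)
  with eventually_ge_at_top[of 1] show ?thesis
  proof eventually_elim
    case (elim u)
    have "tail_sum a (exp u) = tail_sum a (real (floor_exp u))"
      unfolding floor_exp_def by (rule tail_sum_nat_floor) simp
    moreover have "u powr (1 + \<gamma>) = u powr \<gamma> * u" using elim by (simp add: powr_add)
    moreover have "Lw (real (floor_exp u)) > 0" "ln (real (floor_exp u)) > 0" using elim A by auto
    ultimately show ?case unfolding L_log_def weight_tail_ratio_def
      using tail_sum_pos[of "real (floor_exp u)"] by (simp add: field_simps)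
  qed
qed

lemma L_log_ratio_below_1:
  assumes c: "0 < c" "c < 1"
  shows "((\<lambda>u. L_log (c * u) / L_log u) \<longlongrightarrow> 1) at_top"
proof -
  define R where "R u = Lw (exp u) / Lw (real (floor_exp u))" for u
  define V where "V u = u / ln (real (floor_exp u))" for u
  define X where "X u = weight_tail_ratio (floor_exp u)" for u
  have cu: "filterlim (\<lambda>u::real. c * u) at_top at_top" using c by real_asymp
  have R: "(R \<longlongrightarrow> 1) at_top" and V: "(V \<longlongrightarrow> 1) at_top" and X: "(X \<longlongrightarrow> \<gamma>) at_top"
    unfolding R_def V_def X_def using Lw_exp_floor_ratio ln_floor_exp_ratio
      filterlim_compose[OF weight_tail_ratio_tendsto filterlim_floor_exp] by auto
  have "eventually (\<lambda>u. (c * u) powr \<gamma> / u powr \<gamma> = c powr \<gamma>) at_top"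
    using eventually_gt_at_top[of 0] by eventually_elim (use c in \<open>simp add: powr_mult\<close>)
  then have "((\<lambda>u. (c * u) powr \<gamma> / u powr \<gamma>) \<longlongrightarrow> c powr \<gamma>) at_top"
    by (rule tendsto_eventually)
  then have lim: "((\<lambda>u. (R (c * u) / R u) * (X (c * u) / X u) * (tail_sum a (exp (c * u)) / tail_sum a (exp u)) *
      ((c * u) powr \<gamma> / u powr \<gamma>) * (V (c * u) / V u)) \<longlongrightarrow>
      (1 / 1) * (\<gamma> / \<gamma>) * c powr (- \<gamma>) * c powr \<gamma> * (1 / 1)) at_top"
    using \<gamma>_pos by (intro tendsto_intros filterlim_compose[OF R cu] filterlim_compose[OF V cu]
        filterlim_compose[OF X cu] R V X tail_sum_exp_ratio[OF c]) auto
  have "(1 / 1) * (\<gamma> / \<gamma>) * c powr (- \<gamma>) * c powr \<gamma> * (1 / 1) = (1::real)"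
    using \<gamma>_pos c by (simp add: powr_add[symmetric])
  moreover have factorization:
    "eventually (\<lambda>u. L_log u = R u * X u * tail_sum a (exp u) * u powr \<gamma> * V u) at_top"
    using L_log_factorization unfolding R_def V_def X_def .
  from factorization eventually_compose_filterlim[OF factorization cu]
  have "eventually (\<lambda>u. (R (c * u) / R u) * (X (c * u) / X u) * (tail_sum a (exp (c * u)) / tail_sum a (exp u)) *
      ((c * u) powr \<gamma> / u powr \<gamma>) * (V (c * u) / V u) = L_log (c * u) / L_log u) at_top"
  proof eventually_elim
    case (elim u)
    show ?case unfolding elim by (simp add: times_divide_times_eq)
  qed
  ultimately show ?thesis using lim by (simp add: Lim_transform_eventually)
qed

lemma L_log_eventually_pos_measurable:
  "\<exists>a. (\<forall>x\<ge>a. L_log x > 0) \<and> (\<lambda>x. if a \<le> x then L_log x else 0) \<in> borel_measurable borel"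
proof -
  obtain A where A: "\<And>x. x \<ge> A \<Longrightarrow> Lw x > 0" using slowly_varying_eventually_pos[OF Lw_sv] by blast
  define a0 where "a0 = max (max (ln (max x0 1)) (ln (max A 1))) 1"
  have a0: "x0 \<le> exp x" "A \<le> exp x" "x \<ge> 1" if "x \<ge> a0" for x
  proof -
    have "max x0 1 \<le> exp x" "max A 1 \<le> exp x" "x \<ge> 1"
      using that exp_le_cancel_iff[of "ln (max x0 1)" x] exp_le_cancel_iff[of "ln (max A 1)" x]
      unfolding a0_def by auto
    then show "x0 \<le> exp x" "A \<le> exp x" "x \<ge> 1" by auto
  qed
  define g where "g x = Lw (exp (max a0 x))" for x
  have "mono (\<lambda>x. - g x)"
    unfolding g_def mono_def using a0(1) by (auto intro!: Lw_antimonoD simp: max_def)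
  then have "(\<lambda>x. - (- g x)) \<in> borel_measurable borel" by (intro borel_measurable_uminus borel_measurable_mono)
  then have [measurable]: "g \<in> borel_measurable borel" by simp
  have "(\<lambda>x. if a0 \<le> x then g x * x powr (1 + \<gamma>) else 0) \<in> borel_measurable borel" by measurable
  moreover have "(\<lambda>x. if a0 \<le> x then g x * x powr (1 + \<gamma>) else 0) = (\<lambda>x. if a0 \<le> x then L_log x else 0)"
    unfolding g_def L_log_def by (auto simp: max_def)
  moreover have "L_log x > 0" if "x \<ge> a0" for x
    unfolding L_log_def using A[OF a0(2)[OF that]] a0(3)[OF that] by simp
  ultimately show ?thesis by (intro exI[of _ a0]) auto
qed

lemma L_log_ratio: "c > 0 \<Longrightarrow> ((\<lambda>x. L_log (c * x) / L_log x) \<longlongrightarrow> 1) at_top"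
proof (cases "c < 1")
  case False
  assume c: "c > 0"
  show ?thesis
  proof (cases "c = 1")
    case True
    obtain a where "\<forall>x\<ge>a. L_log x > 0" using L_log_eventually_pos_measurable by blast
    then have "eventually (\<lambda>x. 1 = L_log (c * x) / L_log x) at_top"
      using True by (auto intro!: eventually_mono[OF eventually_ge_at_top[of a]])
    then show ?thesis by (rule Lim_transform_eventually[OF tendsto_const])
  next
    case False
    with \<open>\<not> c < 1\<close> have "0 < 1 / c" "1 / c < 1" by auto
    moreover have "filterlim (\<lambda>u::real. c * u) at_top at_top" using c by real_asymp
    ultimately have "((\<lambda>u. L_log (1 / c * (c * u)) / L_log (c * u)) \<longlongrightarrow> 1) at_top"
      by (rule filterlim_compose[OF L_log_ratio_below_1])
    then have "((\<lambda>u. L_log u / L_log (c * u)) \<longlongrightarrow> 1) at_top" using c by simp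
    then have "((\<lambda>u. 1 / (L_log u / L_log (c * u))) \<longlongrightarrow> 1 / 1) at_top" by (intro tendsto_intros) auto
    then show ?thesis by simp
  qed
qed (use L_log_ratio_below_1 in auto)

lemma slowly_varying_L_log: "slowly_varying L_log"
  unfolding slowly_varying_def using L_log_eventually_pos_measurable L_log_ratio by blast

lemma Lw_eq_L_log: "eventually (\<lambda>n. Lw (real n) = L_log (ln (real n)) / ln (real n) powr (1 + \<gamma>)) sequentially"
  using eventually_ge_at_top[of 2] by eventually_elim (simp add: L_log_def)

end

context tail_seq
begin

lemma weight_profile_not_eventually_mono:
  assumes sv: "slowly_varying Lw" and weights: "(\<lambda>k. a k / (Lw (real k) / real k)) \<longlonglongrightarrow> 1"
  shows "\<not> mono_on {x0..} Lw"
proof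
  assume mono: "mono_on {x0..} Lw"
  obtain A where A: "\<And>x. x \<ge> A \<Longrightarrow> Lw x > 0" using slowly_varying_eventually_pos[OF sv] by blast
  define x1 where "x1 = max (max x0 A) 1"
  have c: "Lw x1 > 0" unfolding x1_def by (intro A) auto
  have Lw_ge: "Lw (real k) \<ge> Lw x1" if "real k \<ge> x1" for k
    using mono that unfolding monotone_on_def x1_def by auto
  have "eventually (\<lambda>k::nat. real k \<ge> x1) sequentially"
    using filterlim_real_sequentially by (simp only: filterlim_at_top)
  moreover from this have "eventually (\<lambda>k. Lw (real k) / real k > 0) sequentially"
    by eventually_elim (use Lw_ge c in \<open>fastforce simp: x1_def\<close>)
  from eventually_abs_diff_less_of_ratio_tendsto_1[OF weights this, of "1/2", simplified] calculation
  have "eventually (\<lambda>k. norm (Lw x1 / 2 * inverse (real k)) \<le> a k) sequentially"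
  proof eventually_elim
    case (elim k)
    have k: "real k \<ge> 1" using elim unfolding x1_def by auto
    have "Lw x1 / 2 * inverse (real k) \<le> Lw (real k) / real k / 2"
      using Lw_ge[OF elim(2)] k by (simp add: field_simps divide_right_mono)
    also have "\<dots> \<le> a k" using elim(1) by (simp add: abs_less_iff)
    finally show ?case using c k by simp
  qed
  then have "summable (\<lambda>k. Lw x1 / 2 * inverse (real k))"
    by (rule summable_comparison_test_ev[OF _ summable])
  then have "summable (\<lambda>k. inverse (real k))" using c summable_mult[of _ "2 / Lw x1"] by auto
  then show False using not_summable_harmonic by blast
qed

lemma tail_ratio_power_of_log_form:
  assumes \<gamma>: "\<gamma> > 0" and sv: "slowly_varying L" and W: "W > 0"
    and weights: "(\<lambda>k. a k / (Lw (real k) / real k)) \<longlonglongrightarrow> 1"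
    and Lw: "eventually (\<lambda>n. Lw (real n) = L (ln (real n)) / ln (real n) powr (1 + \<gamma>)) sequentially"
  shows "(\<forall>t. 0 < t \<and> t < 1 \<longrightarrow> tail_ratio t \<longlonglongrightarrow> t powr (- \<gamma>)) \<and>
    (\<lambda>n. tail_sum a (real n) / W) \<sim>[sequentially] (\<lambda>n. L (ln (real n)) / (W * \<gamma> * ln (real n) powr \<gamma>))"
proof -
  have "eventually (\<lambda>k. a k / (Lw (real k) / real k) = a k / (L (ln (real k)) * log_tail_density \<gamma> (real k)))
      sequentially"
    using Lw eventually_ge_at_top[of 2]
    by eventually_elim (simp add: log_tail_density_def ac_simps)
  with weights have "(\<lambda>k. a k / (L (ln (real k)) * log_tail_density \<gamma> (real k))) \<longlonglongrightarrow> 1"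
    by (rule Lim_transform_eventually)
  then have asymp: "(\<lambda>n. tail_sum a (real n) / log_profile L \<gamma> n) \<longlonglongrightarrow> 1"
    by (rule tail_sum_asymp_log_profile[OF \<gamma> sv])
  have "tail_sum a (real n) / log_profile L \<gamma> n =
      tail_sum a (real n) / W / (L (ln (real n)) / (W * \<gamma> * ln (real n) powr \<gamma>))" for n
    unfolding log_profile_def using W by (simp add: field_simps)
  with asymp have "(\<lambda>n. tail_sum a (real n) / W) \<sim>[sequentially]
      (\<lambda>n. L (ln (real n)) / (W * \<gamma> * ln (real n) powr \<gamma>))"
    by (intro asymp_equivI') simp
  moreover have "\<forall>t. 0 < t \<and> t < 1 \<longrightarrow> tail_ratio t \<longlonglongrightarrow> t powr (- \<gamma>)"
    using tail_ratio_tendsto_of_log_profile[OF \<gamma> sv _ _ asymp] by simp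
  ultimately show ?thesis by simp
qed

lemma log_form_of_tail_ratio_power:
  assumes \<gamma>: "\<gamma> > 0" and sv: "slowly_varying Lw"
    and weights: "(\<lambda>k. a k / (Lw (real k) / real k)) \<longlonglongrightarrow> 1"
    and mono: "\<exists>x0. mono_on {x0..} Lw \<or> antimono_on {x0..} Lw"
    and power: "\<forall>t. 0 < t \<and> t < 1 \<longrightarrow> tail_ratio t \<longlonglongrightarrow> t powr (- \<gamma>)"
  shows "\<exists>L. slowly_varying L \<and>
    eventually (\<lambda>n. Lw (real n) = L (ln (real n)) / ln (real n) powr (1 + \<gamma>)) sequentially"
proof -
  obtain x0 where "antimono_on {x0..} Lw" using mono weight_profile_not_eventually_mono[OF sv weights] by blast
  then interpret regular_tail a \<gamma> x0 Lw
    using \<gamma> sv weights power by unfold_locales auto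
  show ?thesis using slowly_varying_L_log Lw_eq_L_log by blast
qed

end

lemma weights_ratio_tendsto:
  fixes w :: "nat \<Rightarrow> real"
  assumes \<rho>: "\<rho> > 0" and sv: "slowly_varying Lw"
    and w: "w \<sim>[sequentially] (\<lambda>n. Lw (real n) * real n powr (-1) * \<rho> powr (- real n))"
  shows "(\<lambda>k. w k * \<rho> ^ k / (Lw (real k) / real k)) \<longlonglongrightarrow> 1"
proof -
  have "(\<lambda>n. Lw (real n) * real n powr (-1) * \<rho> powr (- real n) * \<rho> ^ n) = (\<lambda>n. Lw (real n) / real n)"
    using \<rho> by (auto simp: powr_minus powr_realpow[symmetric] divide_inverse)
  then have "(\<lambda>n. w n * \<rho> ^ n) \<sim>[sequentially] (\<lambda>n. Lw (real n) / real n)"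
    using asymp_equiv_mult[OF w asymp_equiv_refl[of "\<lambda>n. \<rho> ^ n"]] by simp
  moreover obtain A where A: "\<And>x. x \<ge> A \<Longrightarrow> Lw x > 0" using slowly_varying_eventually_pos[OF sv] by blast
  have "eventually (\<lambda>k::nat. real k \<ge> max A 1) sequentially"
    using filterlim_real_sequentially by (simp only: filterlim_at_top)
  then have "eventually (\<lambda>k. w k * \<rho> ^ k \<noteq> 0 \<or> Lw (real k) / real k \<noteq> 0) sequentially"
    by eventually_elim (auto dest: A)
  ultimately show ?thesis by (rule asymp_equivD_strong)
qed

lemma tail_seq_of_weights:
  fixes w :: "nat \<Rightarrow> real"
  assumes "\<And>n. w n \<ge> 0" "\<rho> > 0" "slowly_varying Lw" "summable (\<lambda>n. w n * \<rho> ^ n)"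
    and weights: "(\<lambda>k. w k * \<rho> ^ k / (Lw (real k) / real k)) \<longlonglongrightarrow> 1"
  shows "tail_seq (\<lambda>k. w k * \<rho> ^ k)"
proof
  obtain A where A: "\<And>x. x \<ge> A \<Longrightarrow> Lw x > 0" using slowly_varying_eventually_pos[OF assms(3)] by blast
  have "eventually (\<lambda>k::nat. real k \<ge> max A 1) sequentially"
    using filterlim_real_sequentially by (simp only: filterlim_at_top)
  with order_tendstoD(1)[OF weights zero_less_one]
  show "eventually (\<lambda>k. w k * \<rho> ^ k > 0) sequentially"
    by eventually_elim (auto simp: zero_less_divide_iff zero_less_mult_iff dest: A)
qed (use assms in auto)

theorem proposition1p3:
  fixes w :: "nat \<Rightarrow> real" and \<rho> :: real and Lw :: "real \<Rightarrow> real"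
  assumes w_nonneg: "\<And>n. w n \<ge> 0"
    and rho_pos: "\<rho> > 0"
    and Lw_sv: "slowly_varying Lw"
    and w_asymp: "w \<sim>[sequentially] (\<lambda>n. Lw (real n) * (real n) powr (-1) * \<rho> powr (- real n))"
    and W_fin: "summable (\<lambda>n. w n * \<rho> ^ n)"
    and W_pos: "gen_fun w \<rho> > 0"
  shows
    "((\<forall>t. 0 < t \<and> t < 1 \<longrightarrow>
          convergent (\<lambda>n. tail_prob w \<rho> (real n powr t) / tail_prob w \<rho> (real n)))
      \<longleftrightarrow> (\<exists>\<gamma>\<ge>0. \<forall>t. 0 < t \<and> t < 1 \<longrightarrow>
          (\<lambda>n. tail_prob w \<rho> (real n powr t) / tail_prob w \<rho> (real n)) \<longlonglongrightarrow> t powr (- \<gamma>)))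
    \<and> (\<forall>\<gamma> L. \<gamma> > 0 \<and> slowly_varying L \<and>
          (\<forall>\<^sub>F n in sequentially. Lw (real n) = L (ln (real n)) / ln (real n) powr (1 + \<gamma>))
        \<longrightarrow> (\<forall>t. 0 < t \<and> t < 1 \<longrightarrow>
              (\<lambda>n. tail_prob w \<rho> (real n powr t) / tail_prob w \<rho> (real n)) \<longlonglongrightarrow> t powr (- \<gamma>))
          \<and> (\<lambda>n. tail_prob w \<rho> (real n)) \<sim>[sequentially]
              (\<lambda>n. L (ln (real n)) / (gen_fun w \<rho> * \<gamma> * ln (real n) powr \<gamma>)))
    \<and> (\<forall>\<gamma>. \<gamma> > 0 \<and> (\<exists>x0. mono_on {x0..} Lw \<or> antimono_on {x0..} Lw) \<and>
          (\<forall>t. 0 < t \<and> t < 1 \<longrightarrow>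
              (\<lambda>n. tail_prob w \<rho> (real n powr t) / tail_prob w \<rho> (real n)) \<longlonglongrightarrow> t powr (- \<gamma>))
        \<longrightarrow> (\<exists>L. slowly_varying L \<and>
              (\<forall>\<^sub>F n in sequentially. Lw (real n) = L (ln (real n)) / ln (real n) powr (1 + \<gamma>))))"
proof -
  define a where "a k = w k * \<rho> ^ k" for k
  have weights: "(\<lambda>k. a k / (Lw (real k) / real k)) \<longlonglongrightarrow> 1"
    unfolding a_def by (rule weights_ratio_tendsto[OF rho_pos Lw_sv w_asymp])
  interpret tail_seq a
    unfolding a_def by (rule tail_seq_of_weights[OF w_nonneg rho_pos Lw_sv W_fin weights[unfolded a_def]])
  have tail: "tail_prob w \<rho> x = tail_sum a x / gen_fun w \<rho>" for x
    unfolding tail_prob_def tail_sum_def a_def ..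
  have ratio: "(\<lambda>n. tail_prob w \<rho> (real n powr t) / tail_prob w \<rho> (real n)) = tail_ratio t" for t
    unfolding tail tail_ratio_def using W_pos by auto
  show ?thesis unfolding ratio unfolding tail
    by (rule conjI[OF convergent_tail_ratio_iff_power], rule conjI; intro allI impI; elim conjE)
      (rule tail_ratio_power_of_log_form[OF _ _ W_pos weights] log_form_of_tail_ratio_power[OF _ Lw_sv weights];
        assumption)+
qed

end
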